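(* Let $k=\mathbb C$, $A=\mathbb C_{-1}[x_1,x_2]$ (so $x_2x_1=-x_1x_2$), $m\ge1$, $\lambda$ a primitive $2m$-th root of unity, and $G=M(2,1,2m)$, the subgroup of $\mathrm{Aut}(A)$ generated by $\tau_{2,1,1}$ and $\tau_{2,1,\lambda}$. Then $A^G=\mathbb C[x_1x_2,\ x_1^{2m}+x_2^{2m}]$, and $G$ is isomorphic to the dicyclic group $Q_{4m}=\langle a,b\mid a^{2m}=1,\ b^{-1}ab=a^{-1},\ b^2=a^m\rangle$ of order $4m$. If $m\ge2$, then $G$ is not isomorphic to any cyclic group, any symmetric group, or any group $G(m',p,n')$.
   Context: For $s\ne t$ and $\mu\in\mathbb C^\times$, $\tau_{s,t,\mu}$ is the graded automorphism of $A$ with $x_s\mapsto\mu x_t$, $x_t\mapsto-\mu^{-1}x_s$. For positive integers $m',p,n'$ with $p\mid m'$, $G(m',p,n')$ is the group of $n'\times n'$ complex matrices of the form $DP$ where $P$ is a permutation matrix and $D=\mathrm{diag}(\omega_1,\dots,\omega_{n'})$ with $\omega_i^{m'}=1$ and $(\omega_1\cdots\omega_{n'})^{m'/p}=1$; it has order $m'^{n'}n'!/p$. *)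

theory Defs
  imports "Jordan_Normal_Form.Matrix" "HOL-Algebra.Algebra" "HOL-Library.FuncSet"
begin

text \<open>An element of A is given by its coefficients with respect to the
  standard monomial basis x1^i x2^j (indexed by (i,j)); elements of A are the
  finitely supported coefficient functions.\<close>

type_synonym skpoly = "nat \<times> nat \<Rightarrow> complex"

definition skA :: "skpoly set" where
  "skA = {f. finite {e. f e \<noteq> 0}}"

definition sk_add :: "skpoly \<Rightarrow> skpoly \<Rightarrow> skpoly" where
  "sk_add f g = (\<lambda>e. f e + g e)"

definition sk_smult :: "complex \<Rightarrow> skpoly \<Rightarrow> skpoly" where
  "sk_smult c f = (\<lambda>e. c * f e)"

text \<open>Multiplication from the relation x2 x1 = - x1 x2:
  (x1^a x2^b)(x1^c x2^d) = (-1)^(b c) x1^(a+c) x2^(b+d).\<close>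
definition sk_mult :: "skpoly \<Rightarrow> skpoly \<Rightarrow> skpoly" where
  "sk_mult f g = (\<lambda>(i, j). \<Sum>a\<in>{0..i}. \<Sum>b\<in>{0..j}.
       (-1) ^ (b * (i - a)) * f (a, b) * g (i - a, j - b))"

definition sk_one :: skpoly where
  "sk_one = (\<lambda>e. if e = (0, 0) then 1 else 0)"

definition sk_x1 :: skpoly where
  "sk_x1 = (\<lambda>e. if e = (1, 0) then 1 else 0)"

definition sk_x2 :: skpoly where
  "sk_x2 = (\<lambda>e. if e = (0, 1) then 1 else 0)"

definition sk_x :: "nat \<Rightarrow> skpoly" where
  "sk_x s = (if s = 1 then sk_x1 else sk_x2)"

definition sk_pow :: "skpoly \<Rightarrow> nat \<Rightarrow> skpoly" where
  "sk_pow f n = (sk_mult f ^^ n) sk_one"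

definition sk_aut_set :: "(skpoly \<Rightarrow> skpoly) set" where
  "sk_aut_set = {\<phi>. \<phi> \<in> extensional skA \<and> bij_betw \<phi> skA skA
      \<and> (\<forall>f\<in>skA. \<forall>g\<in>skA. \<phi> (sk_add f g) = sk_add (\<phi> f) (\<phi> g))
      \<and> (\<forall>c. \<forall>f\<in>skA. \<phi> (sk_smult c f) = sk_smult c (\<phi> f))
      \<and> (\<forall>f\<in>skA. \<forall>g\<in>skA. \<phi> (sk_mult f g) = sk_mult (\<phi> f) (\<phi> g))
      \<and> \<phi> sk_one = sk_one}"

definition sk_Aut :: "(skpoly \<Rightarrow> skpoly) monoid" where
  "sk_Aut = \<lparr>carrier = sk_aut_set, mult = (\<lambda>\<phi> \<psi>. compose skA \<phi> \<psi>),
             one = restrict id skA\<rparr>"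

definition sk_tau :: "nat \<Rightarrow> nat \<Rightarrow> complex \<Rightarrow> (skpoly \<Rightarrow> skpoly)" where
  "sk_tau s t \<mu> = (THE \<phi>. \<phi> \<in> sk_aut_set
       \<and> \<phi> (sk_x s) = sk_smult \<mu> (sk_x t)
       \<and> \<phi> (sk_x t) = sk_smult (- inverse \<mu>) (sk_x s))"

definition sk_invariants :: "(skpoly \<Rightarrow> skpoly, 'b) monoid_scheme \<Rightarrow> skpoly set" where
  "sk_invariants G = {f \<in> skA. \<forall>g\<in>carrier G. g f = f}"

inductive_set sk_alg_gen :: "skpoly set \<Rightarrow> skpoly set" for S where
  scalar: "sk_smult c sk_one \<in> sk_alg_gen S"
| gen: "s \<in> S \<Longrightarrow> s \<in> sk_alg_gen S"
| add: "f \<in> sk_alg_gen S \<Longrightarrow> g \<in> sk_alg_gen S \<Longrightarrow> sk_add f g \<in> sk_alg_gen S"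
| mult: "f \<in> sk_alg_gen S \<Longrightarrow> g \<in> sk_alg_gen S \<Longrightarrow> sk_mult f g \<in> sk_alg_gen S"

text \<open>Model of the presentation <a,b | a^(2m)=1, b^-1 a b = a^-1, b^2 = a^m>
  by normal forms a^i b^e, 0 <= i < 2m, e in {0,1} (True means e = 1).\<close>
definition dicyclic_mult :: "nat \<Rightarrow> int \<times> bool \<Rightarrow> int \<times> bool \<Rightarrow> int \<times> bool" where
  "dicyclic_mult m x y = (case x of (i, e) \<Rightarrow> case y of (j, f) \<Rightarrow>
     if \<not> e then ((i + j) mod (2 * int m), f)
     else if \<not> f then ((i - j) mod (2 * int m), True)
     else ((i - j + int m) mod (2 * int m), False))"

definition dicyclic_group :: "nat \<Rightarrow> (int \<times> bool) monoid" where
  "dicyclic_group m = \<lparr>carrier = {0..<2 * int m} \<times> UNIV,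
                        mult = dicyclic_mult m, one = (0, False)\<rparr>"

definition perm_matrix :: "nat \<Rightarrow> (nat \<Rightarrow> nat) \<Rightarrow> complex mat" where
  "perm_matrix n \<sigma> = mat n n (\<lambda>(i, j). if i = \<sigma> j then 1 else 0)"

definition diag_matrix :: "nat \<Rightarrow> (nat \<Rightarrow> complex) \<Rightarrow> complex mat" where
  "diag_matrix n \<omega> = mat n n (\<lambda>(i, j). if i = j then \<omega> i else 0)"

definition Gmpn :: "nat \<Rightarrow> nat \<Rightarrow> nat \<Rightarrow> complex mat monoid" where
  "Gmpn m' p n' = \<lparr>carrier = {diag_matrix n' \<omega> * perm_matrix n' \<sigma> | \<omega> \<sigma>.
        \<sigma> permutes {..<n'} \<and> (\<forall>i<n'. \<omega> i ^ m' = 1)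
        \<and> (\<Prod>i<n'. \<omega> i) ^ (m' div p) = 1},
     mult = (*), one = 1\<^sub>m n'\<rparr>"

end

theory Submission
  imports Defs
begin

(* The monomial automorphisms mono_aut a b s rescale x1, x2 and, if s
   holds, interchange them; they compose by an explicit rule, and tau_{2,1,mu} is one of them.

   With w i = lam^i, the map dic_aut sends the normal form (i, e) of the dicyclic group Q_{4m},
   standing for a^i b^e, to a monomial automorphism.  It is injective and multiplicative, and
   its image is exactly the group G generated by the two taus.  Hence the normal-form model of
   Q_{4m} is a group, G is isomorphic to it, and |G| = 4m.

   An element of A is G-invariant iff its coefficients live on exponents (p,q) with 2m | q - p
   and are symmetric in (p,q).  Such an element is a combination of symmetrised monomials,
   which lie in C[x1 x2, x1^(2m) + x2^(2m)] by a recursion for the power sums x1^N + x2^N.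

   For m >= 2 the group G is nonabelian, has order 4m and exactly one involution.  These
   isomorphism invariants exclude cyclic groups (abelian), symmetric groups (two distinct
   transpositions, or at most 6 elements) and the groups G(m',p,n') (abelian for n' = 1, at
   most 2 elements for n' = 2, m' = 1, and two distinct involutions otherwise). *)

section \<open>Coefficient calculus in A\<close>

definition supp :: "skpoly \<Rightarrow> (nat \<times> nat) set" where
  "supp f = {e. f e \<noteq> 0}"

definition sk_mon :: "nat \<times> nat \<Rightarrow> skpoly" where
  "sk_mon t = (\<lambda>e. if e = t then 1 else 0)"

lemma skA_iff: "f \<in> skA \<longleftrightarrow> finite (supp f)"
  by (simp add: skA_def supp_def)

lemma sk_mon_in_skA [simp]: "sk_mon t \<in> skA"
proof -
  have "supp (sk_mon t) \<subseteq> {t}" by (auto simp: supp_def sk_mon_def)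
  thus ?thesis by (simp add: skA_iff finite_subset)
qed

lemma sk_add_in_skA [simp]: "f \<in> skA \<Longrightarrow> g \<in> skA \<Longrightarrow> sk_add f g \<in> skA"
proof -
  assume "f \<in> skA" "g \<in> skA"
  moreover have "supp (sk_add f g) \<subseteq> supp f \<union> supp g" by (auto simp: supp_def sk_add_def)
  ultimately show ?thesis by (simp add: skA_iff finite_subset)
qed

lemma sk_smult_in_skA [simp]: "f \<in> skA \<Longrightarrow> sk_smult c f \<in> skA"
proof -
  assume "f \<in> skA"
  moreover have "supp (sk_smult c f) \<subseteq> supp f" by (auto simp: supp_def sk_smult_def)
  ultimately show ?thesis by (simp add: skA_iff finite_subset)
qed

text \<open>A product can only have nonzero coefficients at sums of exponents from the two factors.\<close>
lemma sk_mult_in_skA [simp]: "f \<in> skA \<Longrightarrow> g \<in> skA \<Longrightarrow> sk_mult f g \<in> skA"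
proof -
  assume f: "f \<in> skA" and g: "g \<in> skA"
  have "supp (sk_mult f g) \<subseteq> (\<lambda>((a, b), (c, d)). (a + c, b + d)) ` (supp f \<times> supp g)"
  proof
    fix e assume "e \<in> supp (sk_mult f g)"
    then obtain i j where e: "e = (i, j)" and ne: "sk_mult f g (i, j) \<noteq> 0"
      by (cases e) (auto simp: supp_def)
    from ne obtain a b where ab: "a \<in> {0..i}" "b \<in> {0..j}"
      and "(-1) ^ (b * (i - a)) * f (a, b) * g (i - a, j - b) \<noteq> 0"
      unfolding sk_mult_def by (auto elim!: sum.not_neutral_contains_not_neutral)
    hence "f (a, b) \<noteq> 0" "g (i - a, j - b) \<noteq> 0" by auto
    with ab show "e \<in> (\<lambda>((a, b), (c, d)). (a + c, b + d)) ` (supp f \<times> supp g)"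
      unfolding e supp_def by (intro image_eqI[where x = "((a, b), (i - a, j - b))"]) auto
  qed
  moreover have "finite (supp f \<times> supp g)" using f g by (simp add: skA_iff)
  ultimately show ?thesis by (simp add: skA_iff finite_subset)
qed

lemma sk_one_mon: "sk_one = sk_mon (0, 0)" by (simp add: sk_one_def sk_mon_def)
lemma sk_x1_mon: "sk_x1 = sk_mon (1, 0)" by (simp add: sk_x1_def sk_mon_def)
lemma sk_x2_mon: "sk_x2 = sk_mon (0, 1)" by (simp add: sk_x2_def sk_mon_def)

lemma sk_one_in_skA [simp]: "sk_one \<in> skA" by (simp add: sk_one_mon)
lemma sk_x1_in_skA [simp]: "sk_x1 \<in> skA" by (simp add: sk_x1_mon)
lemma sk_x2_in_skA [simp]: "sk_x2 \<in> skA" by (simp add: sk_x2_mon)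

lemma sk_zero_eq: "sk_smult 0 sk_one = (\<lambda>e. 0)" by (simp add: sk_smult_def)

lemma sk_smult_one [simp]: "sk_smult 1 f = f" by (simp add: sk_smult_def)

lemma sk_add_commute: "sk_add f g = sk_add g f" by (simp add: sk_add_def fun_eq_iff add.commute)

lemma sk_mult_add_left: "sk_mult (sk_add f g) h = sk_add (sk_mult f h) (sk_mult g h)"
  by (auto simp: fun_eq_iff sk_mult_def sk_add_def algebra_simps sum.distrib)

lemma sk_mult_mon_left:
  "sk_mult (sk_mon (a, b)) g (i, j) =
     (if a \<le> i \<and> b \<le> j then (-1) ^ (b * (i - a)) * g (i - a, j - b) else 0)"
proof -
  have "sk_mult (sk_mon (a, b)) g (i, j) = (\<Sum>a'\<in>{0..i}. \<Sum>b'\<in>{0..j}.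
       (if a' = a \<and> b' = b then (-1) ^ (b * (i - a)) * g (i - a, j - b) else 0))"
    unfolding sk_mult_def sk_mon_def prod.case by (intro sum.cong refl) auto
  also have "\<dots> = (\<Sum>a'\<in>{0..i}. if a' = a
      then (if b \<le> j then (-1) ^ (b * (i - a)) * g (i - a, j - b) else 0) else 0)"
    by (intro sum.cong refl) (auto simp: sum.delta')
  also have "\<dots> = (if a \<le> i \<and> b \<le> j then (-1) ^ (b * (i - a)) * g (i - a, j - b) else 0)"
    by (simp add: sum.delta')
  finally show ?thesis .
qed

lemma sk_mult_mon_mon:
  "sk_mult (sk_mon (a, b)) (sk_mon (c, d)) = sk_smult ((-1) ^ (b * c)) (sk_mon (a + c, b + d))"
proof (rule ext)
  fix e :: "nat \<times> nat"
  obtain i j where e: "e = (i, j)" by (cases e)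
  show "sk_mult (sk_mon (a, b)) (sk_mon (c, d)) e = sk_smult ((-1) ^ (b * c)) (sk_mon (a + c, b + d)) e"
    unfolding e sk_mult_mon_left by (auto simp: sk_mon_def sk_smult_def)
qed

lemma sk_mult_scalar: "sk_mult (sk_smult c sk_one) g = sk_smult c g"
proof (rule ext)
  fix e :: "nat \<times> nat"
  obtain i j where e: "e = (i, j)" by (cases e)
  have "sk_mult (sk_smult c (sk_mon (0, 0))) g (i, j) = c * sk_mult (sk_mon (0, 0)) g (i, j)"
    unfolding sk_mult_def sk_smult_def prod.case
    by (simp add: sum_distrib_left mult.assoc mult.left_commute)
  thus "sk_mult (sk_smult c sk_one) g e = sk_smult c g e"
    unfolding e sk_one_mon sk_mult_mon_left by (simp add: sk_smult_def)
qed

lemma sk_pow_Suc: "sk_pow f (Suc n) = sk_mult f (sk_pow f n)"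
  by (simp add: sk_pow_def)

lemma sk_pow_in_skA [simp]: "f \<in> skA \<Longrightarrow> sk_pow f n \<in> skA"
  by (induction n) (simp_all add: sk_pow_def)

lemma sk_pow_x1: "sk_pow sk_x1 n = sk_mon (n, 0)"
  by (induction n) (simp_all add: sk_pow_def sk_one_mon sk_x1_mon sk_mult_mon_mon)

lemma sk_pow_x2: "sk_pow sk_x2 n = sk_mon (0, n)"
  by (induction n) (simp_all add: sk_pow_def sk_one_mon sk_x2_mon sk_mult_mon_mon)

lemma sk_mon_as_product: "sk_mon (i, j) = sk_mult (sk_pow sk_x1 i) (sk_pow sk_x2 j)"
  by (simp add: sk_pow_x1 sk_pow_x2 sk_mult_mon_mon)

lemma skA_induct [consumes 1, case_names zero add_term]:
  assumes f: "f \<in> skA"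
    and zero: "P (\<lambda>e. 0)"
    and add_term: "\<And>g c t. g \<in> skA \<Longrightarrow> P g \<Longrightarrow> P (sk_add g (sk_smult c (sk_mon t)))"
  shows "P f"
proof -
  have "\<forall>f. supp f \<subseteq> S \<longrightarrow> P f" if "finite S" for S
    using that
  proof (induction S rule: finite_induct)
    case empty
    have "f = (\<lambda>e. 0)" if "supp f \<subseteq> {}" for f :: skpoly
      using that by (auto simp: supp_def fun_eq_iff)
    thus ?case using zero by metis
  next
    case (insert t S)
    show ?case
    proof (intro allI impI)
      fix f assume sf: "supp f \<subseteq> insert t S"
      have s: "supp (f(t := 0)) \<subseteq> S" using sf by (auto simp: supp_def)
      hence "f(t := 0) \<in> skA" using insert.hyps(1) by (simp add: skA_iff finite_subset)
      moreover have "P (f(t := 0))" using insert.IH s by blast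
      ultimately have "P (sk_add (f(t := 0)) (sk_smult (f t) (sk_mon t)))" by (rule add_term)
      moreover have "sk_add (f(t := 0)) (sk_smult (f t) (sk_mon t)) = f"
        by (auto simp: fun_eq_iff sk_add_def sk_smult_def sk_mon_def)
      ultimately show "P f" by simp
    qed
  qed
  thus ?thesis using f by (simp add: skA_iff)
qed

section \<open>The automorphism group of A\<close>

definition sk_alg_hom :: "(skpoly \<Rightarrow> skpoly) \<Rightarrow> bool" where
  "sk_alg_hom \<phi> \<longleftrightarrow> (\<forall>f\<in>skA. \<forall>g\<in>skA. \<phi> (sk_add f g) = sk_add (\<phi> f) (\<phi> g))
      \<and> (\<forall>c. \<forall>f\<in>skA. \<phi> (sk_smult c f) = sk_smult c (\<phi> f))
      \<and> (\<forall>f\<in>skA. \<forall>g\<in>skA. \<phi> (sk_mult f g) = sk_mult (\<phi> f) (\<phi> g))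
      \<and> \<phi> sk_one = sk_one"

lemma sk_aut_set_iff:
  "\<phi> \<in> sk_aut_set \<longleftrightarrow> \<phi> \<in> extensional skA \<and> bij_betw \<phi> skA skA \<and> sk_alg_hom \<phi>"
  by (auto simp: sk_aut_set_def sk_alg_hom_def)

lemma sk_alg_homD:
  assumes "sk_alg_hom \<phi>"
  shows "\<And>f g. f \<in> skA \<Longrightarrow> g \<in> skA \<Longrightarrow> \<phi> (sk_add f g) = sk_add (\<phi> f) (\<phi> g)"
    and "\<And>c f. f \<in> skA \<Longrightarrow> \<phi> (sk_smult c f) = sk_smult c (\<phi> f)"
    and "\<And>f g. f \<in> skA \<Longrightarrow> g \<in> skA \<Longrightarrow> \<phi> (sk_mult f g) = sk_mult (\<phi> f) (\<phi> g)"
    and "\<phi> sk_one = sk_one"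
  using assms by (auto simp: sk_alg_hom_def)

lemma inv_into_preserves_op:
  assumes bij: "bij_betw \<phi> S S"
    and closed: "\<And>x y. x \<in> S \<Longrightarrow> y \<in> S \<Longrightarrow> F x y \<in> S"
    and pres: "\<And>x y. x \<in> S \<Longrightarrow> y \<in> S \<Longrightarrow> \<phi> (F x y) = F (\<phi> x) (\<phi> y)"
    and x: "x \<in> S" and y: "y \<in> S"
  shows "inv_into S \<phi> (F x y) = F (inv_into S \<phi> x) (inv_into S \<phi> y)"
proof (rule inv_into_f_eq)
  have inS: "\<And>z. z \<in> S \<Longrightarrow> inv_into S \<phi> z \<in> S"
    using bij_betwE[OF bij_betw_inv_into[OF bij]] by blast
  show "inj_on \<phi> S" using bij by (simp add: bij_betw_def)
  show "F (inv_into S \<phi> x) (inv_into S \<phi> y) \<in> S" using closed inS x y by blast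
  show "\<phi> (F (inv_into S \<phi> x) (inv_into S \<phi> y)) = F x y"
    using pres inS x y bij_betw_inv_into_right[OF bij] by simp
qed

lemma sk_alg_hom_inv:
  assumes bij: "bij_betw \<phi> skA skA" and hom: "sk_alg_hom \<phi>"
  shows "sk_alg_hom (restrict (inv_into skA \<phi>) skA)"
proof -
  note H = sk_alg_homD[OF hom]
  have inS: "\<And>f. f \<in> skA \<Longrightarrow> inv_into skA \<phi> f \<in> skA"
    using bij_betwE[OF bij_betw_inv_into[OF bij]] by blast
  have one: "inv_into skA \<phi> sk_one = sk_one"
    using bij H(4) by (intro inv_into_f_eq) (auto simp: bij_betw_def)
  have add: "inv_into skA \<phi> (sk_add f g) = sk_add (inv_into skA \<phi> f) (inv_into skA \<phi> g)"
    if "f \<in> skA" "g \<in> skA" for f g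
    by (rule inv_into_preserves_op[OF bij, where F = sk_add]) (use that in \<open>simp_all add: H\<close>)
  have mult: "inv_into skA \<phi> (sk_mult f g) = sk_mult (inv_into skA \<phi> f) (inv_into skA \<phi> g)"
    if "f \<in> skA" "g \<in> skA" for f g
    by (rule inv_into_preserves_op[OF bij, where F = sk_mult]) (use that in \<open>simp_all add: H\<close>)
  have smult: "inv_into skA \<phi> (sk_smult c f) = sk_smult c (inv_into skA \<phi> f)"
    if "f \<in> skA" for c f
    by (rule inv_into_preserves_op[OF bij, where F = "\<lambda>f g. sk_smult c f", simplified])
      (use that in \<open>simp_all add: H\<close>)
  show ?thesis unfolding sk_alg_hom_def using inS one add mult smult by simp
qed

lemma aut_inv:
  assumes "\<phi> \<in> sk_aut_set"
  shows "restrict (inv_into skA \<phi>) skA \<in> sk_aut_set"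
proof -
  have bij: "bij_betw \<phi> skA skA" and hom: "sk_alg_hom \<phi>"
    using assms by (auto simp: sk_aut_set_iff)
  have "bij_betw (restrict (inv_into skA \<phi>) skA) skA skA"
    using bij_betw_inv_into[OF bij] by (rule bij_betw_cong[THEN iffD1, rotated]) simp
  thus ?thesis using sk_alg_hom_inv[OF bij hom] by (simp add: sk_aut_set_iff)
qed

lemma aut_compose:
  assumes "\<phi> \<in> sk_aut_set" "\<psi> \<in> sk_aut_set"
  shows "compose skA \<phi> \<psi> \<in> sk_aut_set"
proof -
  have b1: "bij_betw \<phi> skA skA" and b2: "bij_betw \<psi> skA skA"
    and h1: "sk_alg_hom \<phi>" and h2: "sk_alg_hom \<psi>"
    using assms by (auto simp: sk_aut_set_iff)
  have in2: "\<And>f. f \<in> skA \<Longrightarrow> \<psi> f \<in> skA" using bij_betwE[OF b2] by blast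
  have "bij_betw (compose skA \<phi> \<psi>) skA skA"
    by (rule bij_betw_cong[THEN iffD2, OF _ bij_betw_trans[OF b2 b1]]) (simp add: compose_def)
  moreover have "sk_alg_hom (compose skA \<phi> \<psi>)"
    using sk_alg_homD[OF h1] sk_alg_homD[OF h2] in2 by (simp add: sk_alg_hom_def compose_def)
  ultimately show ?thesis by (simp add: sk_aut_set_iff compose_def)
qed

lemma aut_id: "restrict id skA \<in> sk_aut_set"
proof -
  have "bij_betw (restrict id skA) skA skA"
    by (rule bij_betw_cong[THEN iffD2, OF _ bij_betw_id]) simp
  thus ?thesis by (simp add: sk_aut_set_iff sk_alg_hom_def)
qed

lemma carrier_sk_Aut: "carrier sk_Aut = sk_aut_set"
  by (simp add: sk_Aut_def)

lemma mult_sk_Aut: "x \<otimes>\<^bsub>sk_Aut\<^esub> y = compose skA x y"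
  by (simp add: sk_Aut_def)

lemma group_sk_Aut: "group sk_Aut"
proof (rule groupI)
  show "\<And>x y. x \<in> carrier sk_Aut \<Longrightarrow> y \<in> carrier sk_Aut \<Longrightarrow> x \<otimes>\<^bsub>sk_Aut\<^esub> y \<in> carrier sk_Aut"
    by (simp add: sk_Aut_def aut_compose)
  show "\<one>\<^bsub>sk_Aut\<^esub> \<in> carrier sk_Aut" by (simp add: sk_Aut_def aut_id)
  fix x assume x: "x \<in> carrier sk_Aut"
  hence ext: "x \<in> extensional skA" and bij: "bij_betw x skA skA"
    by (auto simp: sk_Aut_def sk_aut_set_iff)
  show "x \<otimes>\<^bsub>sk_Aut\<^esub> y \<otimes>\<^bsub>sk_Aut\<^esub> z = x \<otimes>\<^bsub>sk_Aut\<^esub> (y \<otimes>\<^bsub>sk_Aut\<^esub> z)"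
    if "z \<in> carrier sk_Aut" for y z
  proof -
    have "z \<in> skA \<rightarrow> skA" using that by (simp add: sk_Aut_def sk_aut_set_iff bij_betw_imp_funcset)
    thus ?thesis by (simp add: sk_Aut_def compose_assoc)
  qed
  show "\<one>\<^bsub>sk_Aut\<^esub> \<otimes>\<^bsub>sk_Aut\<^esub> x = x"
    using Id_compose[of x skA skA] bij_betw_imp_funcset[OF bij] ext
    by (simp add: sk_Aut_def restrict_def id_def)
  have "compose skA (restrict (inv_into skA x) skA) x = (\<lambda>y\<in>skA. y)"
    using ext bij by (intro Bij_compose_restrict_eq) (simp add: Bij_def)
  moreover have "restrict (inv_into skA x) skA \<in> sk_aut_set"
    using x by (intro aut_inv) (simp add: sk_Aut_def)
  ultimately show "\<exists>y\<in>carrier sk_Aut. y \<otimes>\<^bsub>sk_Aut\<^esub> x = \<one>\<^bsub>sk_Aut\<^esub>"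
    by (auto simp: sk_Aut_def restrict_def id_def
        intro!: bexI[where x = "restrict (inv_into skA x) skA"])
qed

lemma sk_alg_hom_pow:
  assumes "sk_alg_hom \<phi>" "f \<in> skA"
  shows "\<phi> (sk_pow f n) = sk_pow (\<phi> f) n"
proof (induction n)
  case 0 thus ?case using sk_alg_homD(4)[OF assms(1)] by (simp add: sk_pow_def)
next
  case (Suc n)
  thus ?case using assms sk_alg_homD(3)[OF assms(1)] by (simp add: sk_pow_Suc)
qed

lemma aut_determined:
  assumes ph: "\<phi> \<in> sk_aut_set" and ps: "\<psi> \<in> sk_aut_set"
    and x1: "\<phi> sk_x1 = \<psi> sk_x1" and x2: "\<phi> sk_x2 = \<psi> sk_x2"
  shows "\<phi> = \<psi>"
proof
  fix f
  have hp: "sk_alg_hom \<phi>" and hs: "sk_alg_hom \<psi>"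
    and ext: "\<phi> \<in> extensional skA" "\<psi> \<in> extensional skA"
    using ph ps by (auto simp: sk_aut_set_iff)
  have mon: "\<phi> (sk_mon t) = \<psi> (sk_mon t)" for t
  proof -
    obtain i j where t: "t = (i, j)" by (cases t)
    show ?thesis unfolding t sk_mon_as_product
      using x1 x2 sk_alg_homD(3)[OF hp] sk_alg_homD(3)[OF hs] sk_alg_hom_pow[OF hp] sk_alg_hom_pow[OF hs]
      by simp
  qed
  show "\<phi> f = \<psi> f"
  proof (cases "f \<in> skA")
    case True
    thus ?thesis
    proof (induction rule: skA_induct)
      case zero
      have "\<phi> (sk_smult 0 sk_one) = \<psi> (sk_smult 0 sk_one)"
        using sk_alg_homD(2,4)[OF hp] sk_alg_homD(2,4)[OF hs] by simp
      thus ?case by (simp only: sk_zero_eq)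
    next
      case (add_term g c t)
      thus ?case using mon sk_alg_homD(1,2)[OF hp] sk_alg_homD(1,2)[OF hs] by simp
    qed
  next
    case False
    thus ?thesis using ext by (simp add: extensional_def)
  qed
qed

lemma sk_alg_gen_in_skA: "f \<in> sk_alg_gen S \<Longrightarrow> S \<subseteq> skA \<Longrightarrow> f \<in> skA"
  by (induction rule: sk_alg_gen.induct) auto

lemma sk_alg_hom_fixes_alg_gen:
  assumes hom: "sk_alg_hom \<phi>" and S: "S \<subseteq> skA" and fix_S: "\<forall>s\<in>S. \<phi> s = s"
    and f: "f \<in> sk_alg_gen S"
  shows "\<phi> f = f"
  using f
proof (induction rule: sk_alg_gen.induct)
  case (scalar c) thus ?case using sk_alg_homD(2,4)[OF hom] by simp
next
  case (gen s) thus ?case using fix_S by simp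
next
  case (add f g) thus ?case using sk_alg_homD(1)[OF hom] sk_alg_gen_in_skA S by simp
next
  case (mult f g) thus ?case using sk_alg_homD(3)[OF hom] sk_alg_gen_in_skA S by simp
qed

section \<open>Monomial automorphisms\<close>

text \<open>For scalars a, b the map mono_aut a b False sends x1^p x2^q to a^p b^q x1^p x2^q, and
  mono_aut a b True sends x1 to a x2 and x2 to b x1; on coefficients it reads as follows
  (the sign (-1)^(pq) comes from reordering x2^p x1^q).\<close>
definition mono_aut :: "complex \<Rightarrow> complex \<Rightarrow> bool \<Rightarrow> skpoly \<Rightarrow> skpoly" where
  "mono_aut a b s = restrict (\<lambda>f (p, q). if s then (-1) ^ (p * q) * a ^ q * b ^ p * f (q, p)
                                        else a ^ p * b ^ q * f (p, q)) skA"

lemma mono_aut_app: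
  "f \<in> skA \<Longrightarrow> mono_aut a b s f (p, q) =
     (if s then (-1) ^ (p * q) * a ^ q * b ^ p * f (q, p) else a ^ p * b ^ q * f (p, q))"
  by (simp add: mono_aut_def)

lemma mono_aut_in_skA [simp]: "f \<in> skA \<Longrightarrow> mono_aut a b s f \<in> skA"
proof -
  assume f: "f \<in> skA"
  have "supp (mono_aut a b s f) \<subseteq> supp f \<union> prod.swap ` supp f"
  proof
    fix e assume "e \<in> supp (mono_aut a b s f)"
    then obtain p q where e: "e = (p, q)" and ne: "mono_aut a b s f (p, q) \<noteq> 0"
      by (cases e) (auto simp: supp_def)
    show "e \<in> supp f \<union> prod.swap ` supp f"
    proof (cases s)
      case True
      with ne f have "(q, p) \<in> supp f" by (auto simp: mono_aut_app supp_def)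
      thus ?thesis unfolding e by (auto intro: image_eqI[where x = "(q, p)"])
    next
      case False
      with ne f show ?thesis unfolding e by (auto simp: mono_aut_app supp_def)
    qed
  qed
  moreover have "finite (supp f \<union> prod.swap ` supp f)" using f by (simp add: skA_iff)
  ultimately show ?thesis by (simp add: skA_iff finite_subset)
qed

lemma mono_aut_mon:
  "mono_aut a b s (sk_mon (p, q)) =
     (if s then sk_smult ((-1) ^ (p * q) * a ^ p * b ^ q) (sk_mon (q, p))
      else sk_smult (a ^ p * b ^ q) (sk_mon (p, q)))"
proof (rule ext)
  fix e :: "nat \<times> nat"
  obtain i j where e: "e = (i, j)" by (cases e)
  show "mono_aut a b s (sk_mon (p, q)) e =
    (if s then sk_smult ((-1) ^ (p * q) * a ^ p * b ^ q) (sk_mon (q, p))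
     else sk_smult (a ^ p * b ^ q) (sk_mon (p, q))) e"
    unfolding e mono_aut_app[OF sk_mon_in_skA]
    by (cases s) (auto simp: sk_mon_def sk_smult_def mult.commute)
qed

lemma mono_aut_x1: "mono_aut a b s sk_x1 = (if s then sk_smult a sk_x2 else sk_smult a sk_x1)"
  by (simp add: sk_x1_mon sk_x2_mon mono_aut_mon)

lemma mono_aut_x2: "mono_aut a b s sk_x2 = (if s then sk_smult b sk_x1 else sk_smult b sk_x2)"
  by (simp add: sk_x1_mon sk_x2_mon mono_aut_mon)

lemma mono_aut_comp_app:
  assumes f: "f \<in> skA"
  shows "mono_aut a b s (mono_aut c d s' f) =
     (if s' then mono_aut (c * b) (d * a) (\<not> s) f else mono_aut (c * a) (d * b) s f)"
proof (rule ext)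
  fix e :: "nat \<times> nat"
  obtain p q where e: "e = (p, q)" by (cases e)
  have sign: "(-1::complex) ^ (p * q) * (-1) ^ (q * p) = 1"
    by (simp add: mult.commute power_add[symmetric] minus_one_power_iff)
  note app = mono_aut_app[OF mono_aut_in_skA[OF f]] mono_aut_app[OF f]
  show "mono_aut a b s (mono_aut c d s' f) e =
     (if s' then mono_aut (c * b) (d * a) (\<not> s) f else mono_aut (c * a) (d * b) s f) e"
  proof (cases s; cases s')
    assume "s" "s'"
    hence "mono_aut a b s (mono_aut c d s' f) (p, q) =
        ((-1) ^ (p * q) * (-1) ^ (q * p)) * ((c * b) ^ p * (d * a) ^ q * f (p, q))"
      unfolding app by (simp add: power_mult_distrib mult_ac)
    thus ?thesis using \<open>s\<close> \<open>s'\<close> f unfolding e sign by (simp add: mono_aut_app)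
  qed (use f in \<open>simp_all add: e app power_mult_distrib mult_ac\<close>)
qed

lemma mono_aut_compose:
  "compose skA (mono_aut a b s) (mono_aut c d s') =
     (if s' then mono_aut (c * b) (d * a) (\<not> s) else mono_aut (c * a) (d * b) s)"
proof (rule ext)
  fix f
  show "compose skA (mono_aut a b s) (mono_aut c d s') f =
     (if s' then mono_aut (c * b) (d * a) (\<not> s) else mono_aut (c * a) (d * b) s) f"
  proof (cases "f \<in> skA")
    case True thus ?thesis by (simp add: compose_eq mono_aut_comp_app)
  next
    case False thus ?thesis by (simp add: compose_def mono_aut_def)
  qed
qed

lemma mono_aut_id: "mono_aut 1 1 False = restrict id skA"
  by (auto simp: mono_aut_def fun_eq_iff)

text \<open>Without the swap, multiplicativity is the homogeneity of the product in each variable.\<close>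
lemma mono_aut_mult_diag:
  assumes f: "f \<in> skA" and g: "g \<in> skA"
  shows "mono_aut a b False (sk_mult f g) = sk_mult (mono_aut a b False f) (mono_aut a b False g)"
proof (rule ext)
  fix e :: "nat \<times> nat"
  obtain i j where e: "e = (i, j)" by (cases e)
  have "mono_aut a b False (sk_mult f g) (i, j) = a ^ i * b ^ j * sk_mult f g (i, j)"
    using f g by (simp add: mono_aut_app)
  also have "\<dots> = (\<Sum>k\<in>{0..i}. \<Sum>l\<in>{0..j}.
       a ^ i * b ^ j * ((-1) ^ (l * (i - k)) * f (k, l) * g (i - k, j - l)))"
    by (simp add: sk_mult_def sum_distrib_left)
  also have "\<dots> = (\<Sum>k\<in>{0..i}. \<Sum>l\<in>{0..j}. (-1) ^ (l * (i - k)) *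
       (a ^ k * b ^ l * f (k, l)) * (a ^ (i - k) * b ^ (j - l) * g (i - k, j - l)))"
  proof (intro sum.cong refl)
    fix k l assume "k \<in> {0..i}" "l \<in> {0..j}"
    hence "a ^ i = a ^ k * a ^ (i - k)" "b ^ j = b ^ l * b ^ (j - l)"
      by (simp_all add: power_add[symmetric])
    thus "a ^ i * b ^ j * ((-1) ^ (l * (i - k)) * f (k, l) * g (i - k, j - l)) =
       (-1) ^ (l * (i - k)) * (a ^ k * b ^ l * f (k, l)) * (a ^ (i - k) * b ^ (j - l) * g (i - k, j - l))"
      by (simp add: mult_ac)
  qed
  also have "\<dots> = sk_mult (mono_aut a b False f) (mono_aut a b False g) (i, j)"
    using f g by (simp add: sk_mult_def mono_aut_app)
  finally show "mono_aut a b False (sk_mult f g) e = sk_mult (mono_aut a b False f) (mono_aut a b False g) e"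
    unfolding e .
qed

text \<open>The sign identity behind the multiplicativity of the swap x1 <-> x2.\<close>
lemma swap_sign:
  assumes "k \<le> i" "l \<le> j"
  shows "(-1::complex) ^ (i * j) * (-1) ^ (k * (j - l)) =
         (-1) ^ (l * (i - k)) * (-1) ^ (k * l) * (-1) ^ ((i - k) * (j - l))"
proof -
  obtain c d where i: "i = k + c" and j: "j = l + d"
    using assms le_Suc_ex by blast
  have "(k + c) * (l + d) + k * d = (l * c + k * l + c * d) + 2 * (k * d)"
    by (simp add: algebra_simps)
  hence "(-1::complex) ^ ((k + c) * (l + d) + k * d) = (-1) ^ (l * c + k * l + c * d)"
    by (simp only: power_add power_mult) simp
  thus ?thesis unfolding i j by (simp add: power_add)
qed

lemma mono_aut_mult_swap:
  assumes f: "f \<in> skA" and g: "g \<in> skA"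
  shows "mono_aut 1 1 True (sk_mult f g) = sk_mult (mono_aut 1 1 True f) (mono_aut 1 1 True g)"
proof (rule ext)
  fix e :: "nat \<times> nat"
  obtain i j where e: "e = (i, j)" by (cases e)
  have "mono_aut 1 1 True (sk_mult f g) (i, j) = (-1) ^ (i * j) * sk_mult f g (j, i)"
    using f g by (simp add: mono_aut_app)
  also have "\<dots> = (\<Sum>l\<in>{0..j}. \<Sum>k\<in>{0..i}.
       (-1) ^ (i * j) * ((-1) ^ (k * (j - l)) * f (l, k) * g (j - l, i - k)))"
    by (simp add: sk_mult_def sum_distrib_left)
  also have "\<dots> = (\<Sum>k\<in>{0..i}. \<Sum>l\<in>{0..j}.
       (-1) ^ (i * j) * ((-1) ^ (k * (j - l)) * f (l, k) * g (j - l, i - k)))"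
    by (rule sum.swap)
  also have "\<dots> = (\<Sum>k\<in>{0..i}. \<Sum>l\<in>{0..j}. (-1) ^ (l * (i - k)) *
       ((-1) ^ (k * l) * f (l, k)) * ((-1) ^ ((i - k) * (j - l)) * g (j - l, i - k)))"
  proof (intro sum.cong refl)
    fix k l assume "k \<in> {0..i}" "l \<in> {0..j}"
    hence sign: "(-1::complex) ^ (i * j) * (-1) ^ (k * (j - l)) =
        (-1) ^ (l * (i - k)) * (-1) ^ (k * l) * (-1) ^ ((i - k) * (j - l))"
      by (intro swap_sign) auto
    have "(-1) ^ (i * j) * ((-1) ^ (k * (j - l)) * f (l, k) * g (j - l, i - k)) =
        ((-1::complex) ^ (i * j) * (-1) ^ (k * (j - l))) * (f (l, k) * g (j - l, i - k))"
      by (simp only: mult.assoc)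
    also have "\<dots> = (-1) ^ (l * (i - k)) * ((-1) ^ (k * l) * f (l, k)) *
        ((-1) ^ ((i - k) * (j - l)) * g (j - l, i - k))"
      unfolding sign by (simp only: mult_ac)
    finally show "(-1) ^ (i * j) * ((-1) ^ (k * (j - l)) * f (l, k) * g (j - l, i - k)) =
       (-1) ^ (l * (i - k)) * ((-1) ^ (k * l) * f (l, k)) * ((-1) ^ ((i - k) * (j - l)) * g (j - l, i - k))" .
  qed
  also have "\<dots> = sk_mult (mono_aut 1 1 True f) (mono_aut 1 1 True g) (i, j)"
    using f g by (simp add: sk_mult_def mono_aut_app mult.commute)
  finally show "mono_aut 1 1 True (sk_mult f g) e = sk_mult (mono_aut 1 1 True f) (mono_aut 1 1 True g) e"
    unfolding e .
qed

lemma mono_aut_add: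
  assumes f: "f \<in> skA" and g: "g \<in> skA"
  shows "mono_aut a b s (sk_add f g) = sk_add (mono_aut a b s f) (mono_aut a b s g)"
proof (rule ext)
  fix e :: "nat \<times> nat"
  obtain p q where e: "e = (p, q)" by (cases e)
  show "mono_aut a b s (sk_add f g) e = sk_add (mono_aut a b s f) (mono_aut a b s g) e"
    unfolding e mono_aut_app[OF sk_add_in_skA[OF f g]] sk_add_def[of "mono_aut a b s f"]
      mono_aut_app[OF f] mono_aut_app[OF g]
    by (simp add: sk_add_def distrib_left)
qed

lemma mono_aut_smult:
  assumes f: "f \<in> skA"
  shows "mono_aut a b s (sk_smult c f) = sk_smult c (mono_aut a b s f)"
proof (rule ext)
  fix e :: "nat \<times> nat"
  obtain p q where e: "e = (p, q)" by (cases e)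
  show "mono_aut a b s (sk_smult c f) e = sk_smult c (mono_aut a b s f) e"
    unfolding e mono_aut_app[OF sk_smult_in_skA[OF f]] sk_smult_def[of c "mono_aut a b s f"]
      mono_aut_app[OF f]
    by (simp add: sk_smult_def mult.left_commute)
qed

text \<open>Every monomial map is an algebra homomorphism: a swapping one factors as the
  plain swap after a diagonal one.\<close>
lemma mono_aut_alg_hom: "sk_alg_hom (mono_aut a b s)"
proof -
  have mult: "mono_aut a b s (sk_mult f g) = sk_mult (mono_aut a b s f) (mono_aut a b s g)"
    if f: "f \<in> skA" and g: "g \<in> skA" for f g
  proof (cases s)
    case True
    have split: "mono_aut a b True h = mono_aut 1 1 True (mono_aut a b False h)" if "h \<in> skA" for h
      using that by (simp add: mono_aut_comp_app)
    show ?thesis using True f g by (simp add: split mono_aut_mult_diag mono_aut_mult_swap)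
  qed (simp add: f g mono_aut_mult_diag)
  have one: "mono_aut a b s sk_one = sk_one"
    by (cases s) (simp_all add: sk_one_mon mono_aut_mon)
  show ?thesis by (simp add: sk_alg_hom_def mult mono_aut_add mono_aut_smult one)
qed

text \<open>With nonzero scalars the inverse map is again a monomial map.\<close>
lemma mono_aut_aut:
  assumes "a \<noteq> 0" "b \<noteq> 0"
  shows "mono_aut a b s \<in> sk_aut_set"
proof -
  define a' b' where "a' = (if s then inverse b else inverse a)"
    and "b' = (if s then inverse a else inverse b)"
  have "mono_aut a' b' s (mono_aut a b s f) = f" "mono_aut a b s (mono_aut a' b' s f) = f"
    if "f \<in> skA" for f
    using assms that unfolding a'_def b'_def
    by (cases s; simp add: mono_aut_comp_app mono_aut_id)+
  hence "bij_betw (mono_aut a b s) skA skA"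
    by (intro bij_betw_byWitness[where f' = "mono_aut a' b' s"]) auto
  thus ?thesis by (simp add: sk_aut_set_iff mono_aut_alg_hom) (simp add: mono_aut_def)
qed

lemma sk_x_1: "sk_x 1 = sk_x1" by (simp add: sk_x_def)
lemma sk_x_2: "sk_x 2 = sk_x2" by (simp add: sk_x_def)

lemma sk_tau_eq:
  assumes mu: "\<mu> \<noteq> 0"
  shows "sk_tau 2 1 \<mu> = mono_aut (- inverse \<mu>) \<mu> True"
  unfolding sk_tau_def sk_x_1 sk_x_2
proof (rule the_equality)
  show "mono_aut (- inverse \<mu>) \<mu> True \<in> sk_aut_set \<and>
      mono_aut (- inverse \<mu>) \<mu> True sk_x2 = sk_smult \<mu> sk_x1 \<and>
      mono_aut (- inverse \<mu>) \<mu> True sk_x1 = sk_smult (- inverse \<mu>) sk_x2"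
    using mu by (simp add: mono_aut_aut mono_aut_x1 mono_aut_x2)
  fix \<phi> assume "\<phi> \<in> sk_aut_set \<and> \<phi> sk_x2 = sk_smult \<mu> sk_x1 \<and>
      \<phi> sk_x1 = sk_smult (- inverse \<mu>) sk_x2"
  thus "\<phi> = mono_aut (- inverse \<mu>) \<mu> True"
    using mu by (intro aut_determined) (simp_all add: mono_aut_aut mono_aut_x1 mono_aut_x2)
qed

text \<open>Used to see that the normal-form model of Q_{4m} is a group without checking the
  group axioms for its multiplication table by hand.\<close>
lemma group_by_bij_hom:
  assumes G: "group G"
    and inj: "inj_on h (carrier M)" and onto: "h ` carrier M = carrier G"
    and closed: "\<And>x y. x \<in> carrier M \<Longrightarrow> y \<in> carrier M \<Longrightarrow> x \<otimes>\<^bsub>M\<^esub> y \<in> carrier M"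
    and mult: "\<And>x y. x \<in> carrier M \<Longrightarrow> y \<in> carrier M \<Longrightarrow> h (x \<otimes>\<^bsub>M\<^esub> y) = h x \<otimes>\<^bsub>G\<^esub> h y"
    and one: "\<one>\<^bsub>M\<^esub> \<in> carrier M" "h \<one>\<^bsub>M\<^esub> = \<one>\<^bsub>G\<^esub>"
  shows "group M"
proof -
  interpret G: group G by (rule G)
  have hc: "x \<in> carrier M \<Longrightarrow> h x \<in> carrier G" for x using onto by blast
  have eq: "x = y" if "x \<in> carrier M" "y \<in> carrier M" "h x = h y" for x y
    using inj that by (simp add: inj_on_def)
  show ?thesis
  proof (rule groupI)
    fix x assume x: "x \<in> carrier M"
    show "\<one>\<^bsub>M\<^esub> \<otimes>\<^bsub>M\<^esub> x = x"
      using x one by (intro eq) (simp_all add: closed mult hc)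
    obtain y where y: "y \<in> carrier M" "h y = inv\<^bsub>G\<^esub> h x"
      using onto x hc by (metis G.inv_closed imageE)
    have "y \<otimes>\<^bsub>M\<^esub> x = \<one>\<^bsub>M\<^esub>"
      using x y one by (intro eq) (simp_all add: closed mult hc)
    thus "\<exists>y\<in>carrier M. y \<otimes>\<^bsub>M\<^esub> x = \<one>\<^bsub>M\<^esub>" using y by blast
    fix y z assume y: "y \<in> carrier M" and z: "z \<in> carrier M"
    show "x \<otimes>\<^bsub>M\<^esub> y \<otimes>\<^bsub>M\<^esub> z = x \<otimes>\<^bsub>M\<^esub> (y \<otimes>\<^bsub>M\<^esub> z)"
      using x y z by (intro eq) (simp_all add: closed mult hc G.m_assoc)
  qed (use closed one in auto)
qed

section \<open>The group generated by the two automorphisms\<close>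

lemma dvd_diff_residues_eq:
  fixes i j n :: int
  assumes "n dvd (i - j)" "0 \<le> i" "i < n" "0 \<le> j" "j < n"
  shows "i = j"
proof -
  have "i mod n = j mod n" using assms(1) by (simp add: mod_eq_dvd_iff)
  thus ?thesis using assms(2-) by simp
qed

locale dicyclic_setting =
  fixes m :: nat and lam :: complex
  assumes m_pos: "m \<ge> 1" and lam_root: "lam ^ (2 * m) = 1"
    and lam_primitive: "\<forall>k. 0 < k \<and> k < 2 * m \<longrightarrow> lam ^ k \<noteq> 1"
begin

definition w :: "int \<Rightarrow> complex" where
  "w i = lam powi i"

lemma lam_nonzero: "lam \<noteq> 0"
  using lam_root m_pos by (auto simp: zero_power)

lemma w_add: "w (i + j) = w i * w j"
  unfolding w_def using lam_nonzero by (simp add: power_int_add)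

lemma w_neg: "w (- i) = inverse (w i)"
  unfolding w_def by (simp add: power_int_minus)

lemma w_diff: "w (i - j) = w i * inverse (w j)"
  using w_add[of i "- j"] w_neg[of j] by simp

lemma w_0 [simp]: "w 0 = 1" by (simp add: w_def)
lemma w_1 [simp]: "w 1 = lam" by (simp add: w_def)
lemma w_nat: "w (int k) = lam ^ k" by (simp add: w_def)

lemma w_nonzero: "w i \<noteq> 0"
  unfolding w_def using lam_nonzero by simp

lemma w_pow: "w i ^ k = w (int k * i)"
  by (induction k) (simp_all add: w_add algebra_simps)

lemma w_period: "w (2 * int m * k) = 1"
proof -
  have "lam powi (2 * int m) = 1" using lam_root by (metis of_nat_mult of_nat_numeral power_int_of_nat)
  thus ?thesis unfolding w_def by (simp add: power_int_mult)
qed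

lemma w_mod: "w (i mod (2 * int m)) = w i"
  using w_add[of "2 * int m * (i div (2 * int m))" "i mod (2 * int m)"] w_period
  by simp

lemma w_m: "w (int m) = -1"
proof -
  have "lam ^ m * lam ^ m = 1" using lam_root by (simp add: power_add[symmetric] mult_2)
  hence "(lam ^ m - 1) * (lam ^ m + 1) = 0" by (simp add: algebra_simps)
  moreover have "lam ^ m \<noteq> 1" using lam_primitive m_pos by auto
  ultimately show ?thesis by (simp add: w_nat add_eq_0_iff2)
qed

lemma w_eq_1_iff: "w i = 1 \<longleftrightarrow> (2 * int m) dvd i"
proof
  assume w1: "w i = 1"
  define r where "r = i mod (2 * int m)"
  have r: "0 \<le> r" "r < 2 * int m" using m_pos by (simp_all add: r_def)
  have "lam ^ nat r = 1" using w1 w_mod[of i] w_nat[of "nat r"] r(1) by (simp add: r_def)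
  have "r = 0"
  proof (rule ccontr)
    assume "r \<noteq> 0"
    hence "0 < nat r" "nat r < 2 * m" using r by (simp_all add: nat_less_iff)
    thus False using lam_primitive \<open>lam ^ nat r = 1\<close> by blast
  qed
  thus "(2 * int m) dvd i" by (simp add: r_def dvd_eq_mod_eq_0)
next
  assume "(2 * int m) dvd i"
  thus "w i = 1" using w_period by (auto elim: dvdE)
qed

lemma w_eq_iff: "w i = w j \<longleftrightarrow> (2 * int m) dvd (i - j)"
  using w_eq_1_iff[of "i - j"] w_nonzero[of j] by (auto simp: w_diff field_simps)

text \<open>The normal forms of Q_{4m} realised as automorphisms of A: (i, False) is a^i with
  a = diag(lam, lam^-1), and (i, True) is a^i b with b = tau_{2,1,1}.\<close>
definition dic_aut :: "int \<times> bool \<Rightarrow> skpoly \<Rightarrow> skpoly" where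
  "dic_aut x = (case x of (i, s) \<Rightarrow>
     if s then mono_aut (- w (- i)) (w i) True else mono_aut (w i) (w (- i)) False)"

lemma dic_aut_aut: "dic_aut x \<in> sk_aut_set"
  unfolding dic_aut_def by (auto split: prod.split intro!: mono_aut_aut simp: w_nonzero)

lemma dic_aut_cong: "w i = w j \<Longrightarrow> dic_aut (i, s) = dic_aut (j, s)"
  by (simp add: dic_aut_def w_neg)

lemma dic_aut_mod: "dic_aut (i mod (2 * int m), s) = dic_aut (i, s)"
  by (rule dic_aut_cong) (simp add: w_mod)

lemma dic_aut_one: "dic_aut (0, False) = \<one>\<^bsub>sk_Aut\<^esub>"
  by (simp add: dic_aut_def mono_aut_id sk_Aut_def)

text \<open>The defining relations a^(2m) = 1, b a b^-1 = a^-1, b^2 = a^m in explicit form.\<close>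
lemma dic_aut_compose:
  "compose skA (dic_aut (i, s)) (dic_aut (j, t)) =
     (if \<not> s then dic_aut (i + j, t) else if \<not> t then dic_aut (i - j, True)
      else dic_aut (i - j + int m, False))"
  by (cases s; cases t)
    (simp_all add: dic_aut_def mono_aut_compose w_add w_neg w_diff w_m mult_ac inverse_mult_distrib)

lemma dic_aut_mult: "compose skA (dic_aut x) (dic_aut y) = dic_aut (dicyclic_mult m x y)"
proof -
  obtain i s j t where "x = (i, s)" "y = (j, t)" by (cases x, cases y)
  thus ?thesis by (simp add: dic_aut_compose dicyclic_mult_def dic_aut_mod)
qed

lemma carrier_dicyclic: "carrier (dicyclic_group m) = {0..<2 * int m} \<times> UNIV"
  by (simp add: dicyclic_group_def)

lemma dicyclic_mult_closed: "dicyclic_mult m x y \<in> carrier (dicyclic_group m)"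
proof -
  obtain i s j t where "x = (i, s)" "y = (j, t)" by (cases x, cases y)
  thus ?thesis using m_pos by (auto simp: dicyclic_mult_def carrier_dicyclic)
qed

text \<open>The values at x1 recover the normal form, so dic_aut is injective on normal forms.\<close>
lemma dic_aut_x1:
  "dic_aut (i, s) sk_x1 = (if s then sk_smult (- w (- i)) sk_x2 else sk_smult (w i) sk_x1)"
  by (simp add: dic_aut_def mono_aut_x1)

lemma dic_aut_eq_iff: "dic_aut (i, s) = dic_aut (j, t) \<longleftrightarrow> s = t \<and> (2 * int m) dvd (i - j)"
proof
  assume eq: "dic_aut (i, s) = dic_aut (j, t)"
  hence "dic_aut (i, s) sk_x1 = dic_aut (j, t) sk_x1" by simp
  hence "(if s then sk_smult (- w (- i)) sk_x2 else sk_smult (w i) sk_x1) =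
      (if t then sk_smult (- w (- j)) sk_x2 else sk_smult (w j) sk_x1)"
    by (simp only: dic_aut_x1)
  from fun_cong[OF this, of "(1, 0)"] fun_cong[OF this, of "(0, 1)"]
  have "s = t" "w i = w j"
    using w_nonzero[of i] w_nonzero[of j]
    by (auto simp: sk_smult_def sk_x1_def sk_x2_def w_neg split: if_splits)
  thus "s = t \<and> (2 * int m) dvd (i - j)" by (simp add: w_eq_iff)
next
  assume "s = t \<and> (2 * int m) dvd (i - j)"
  thus "dic_aut (i, s) = dic_aut (j, t)" by (auto simp: w_eq_iff intro: dic_aut_cong)
qed

lemma dic_aut_inj: "inj_on dic_aut (carrier (dicyclic_group m))"
  by (auto simp: inj_on_def carrier_dicyclic dic_aut_eq_iff intro: dvd_diff_residues_eq)

definition Gtau :: "(skpoly \<Rightarrow> skpoly) monoid" where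
  "Gtau = subgroup_generated sk_Aut {sk_tau 2 1 1, sk_tau 2 1 lam}"

lemma tau_1: "sk_tau 2 1 1 = dic_aut (0, True)"
  using sk_tau_eq[of 1] by (simp add: dic_aut_def)

lemma tau_lam: "sk_tau 2 1 lam = dic_aut (1, True)"
  using sk_tau_eq[of lam] lam_nonzero by (simp add: dic_aut_def w_neg)

lemma group_Gtau: "group Gtau"
  unfolding Gtau_def by (rule group.group_subgroup_generated[OF group_sk_Aut])

lemma mult_Gtau: "x \<otimes>\<^bsub>Gtau\<^esub> y = compose skA x y"
  by (simp add: Gtau_def subgroup_generated_def sk_Aut_def)

lemma one_Gtau: "\<one>\<^bsub>Gtau\<^esub> = dic_aut (0, False)"
  by (simp add: Gtau_def subgroup_generated_def dic_aut_one)

lemma carrier_Gtau_generate: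
  "carrier Gtau = generate sk_Aut (carrier sk_Aut \<inter> {dic_aut (0, True), dic_aut (1, True)})"
  by (simp only: Gtau_def carrier_subgroup_generated tau_1 tau_lam)

lemma inv_dic_aut_swap:
  "inv\<^bsub>sk_Aut\<^esub> dic_aut (i, True) = dic_aut ((i + int m) mod (2 * int m), True)"
proof -
  have "dic_aut (i + int m, True) \<otimes>\<^bsub>sk_Aut\<^esub> dic_aut (i, True) = \<one>\<^bsub>sk_Aut\<^esub>"
    using dic_aut_cong[of "2 * int m" 0 False] w_period[of 1]
    by (simp add: mult_sk_Aut dic_aut_compose dic_aut_one[symmetric] algebra_simps mult_2)
  hence "inv\<^bsub>sk_Aut\<^esub> dic_aut (i, True) = dic_aut (i + int m, True)"
    by (intro group.inv_equality[OF group_sk_Aut]) (simp_all add: carrier_sk_Aut dic_aut_aut)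
  thus ?thesis by (simp add: dic_aut_mod)
qed

text \<open>Every element of G is a normal form: the image of dic_aut is closed under the
  group operations and contains both generators.\<close>
lemma Gtau_sub_image: "carrier Gtau \<subseteq> dic_aut ` carrier (dicyclic_group m)"
proof
  have pos: "0 < 2 * int m" "1 < 2 * int m" using m_pos by simp_all
  fix g assume "g \<in> carrier Gtau"
  thus "g \<in> dic_aut ` carrier (dicyclic_group m)"
    unfolding carrier_Gtau_generate
  proof (induction rule: generate.induct)
    case one
    show ?case using pos
      by (auto simp: dic_aut_one[symmetric] carrier_dicyclic intro!: image_eqI[where x = "(0, False)"])
  next
    case (incl h)
    thus ?case using pos by (auto simp: carrier_dicyclic)
  next
    case (inv h)
    then obtain i where "h = dic_aut (i, True)" by auto
    thus ?case using pos by (auto simp: inv_dic_aut_swap carrier_dicyclic)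
  next
    case (eng h1 h2)
    then obtain x y where "h1 = dic_aut x" "h2 = dic_aut y" by auto
    thus ?case using dicyclic_mult_closed by (auto simp: mult_sk_Aut dic_aut_mult)
  qed
qed

text \<open>Conversely a = b' b^3 with b = tau_{2,1,1}, b' = tau_{2,1,lam}, so all a^i and a^i b lie in G.\<close>
lemma image_sub_Gtau: "dic_aut ` carrier (dicyclic_group m) \<subseteq> carrier Gtau"
proof -
  interpret G: group Gtau by (rule group_Gtau)
  have closed: "compose skA x y \<in> carrier Gtau" if "x \<in> carrier Gtau" "y \<in> carrier Gtau" for x y
    using G.m_closed[OF that] by (simp add: mult_Gtau)
  have b: "dic_aut (0, True) \<in> carrier Gtau" and b': "dic_aut (1, True) \<in> carrier Gtau"
    unfolding carrier_Gtau_generate by (auto intro: generate.incl simp: carrier_sk_Aut dic_aut_aut)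
  have "compose skA (compose skA (compose skA (dic_aut (1, True)) (dic_aut (0, True)))
      (dic_aut (0, True))) (dic_aut (0, True)) = dic_aut (1 + 2 * int m, False)"
    by (simp add: dic_aut_compose algebra_simps)
  also have "\<dots> = dic_aut (1, False)"
    by (rule dic_aut_cong) (simp add: w_add w_period[of 1, simplified])
  finally have a: "dic_aut (1, False) \<in> carrier Gtau"
    using closed b b' by metis
  have a_pow: "dic_aut (int k, False) \<in> carrier Gtau" for k
  proof (induction k)
    case 0 show ?case using G.one_closed by (simp add: one_Gtau)
  next
    case (Suc k)
    from closed[OF Suc a] show ?case by (simp add: dic_aut_compose add.commute)
  qed
  have "dic_aut (int k, s) \<in> carrier Gtau" for k s
    using a_pow closed[OF a_pow b] by (cases s) (simp_all add: dic_aut_compose)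
  thus ?thesis by (auto simp: carrier_dicyclic) (metis nonneg_eq_int)
qed

lemma carrier_Gtau: "carrier Gtau = dic_aut ` carrier (dicyclic_group m)"
  using Gtau_sub_image image_sub_Gtau by blast

lemma dic_aut_iso: "dic_aut \<in> iso (dicyclic_group m) Gtau"
proof (rule isoI)
  show "dic_aut \<in> hom (dicyclic_group m) Gtau"
    by (auto simp: hom_def carrier_Gtau mult_Gtau dic_aut_mult dicyclic_group_def)
  show "bij_betw dic_aut (carrier (dicyclic_group m)) (carrier Gtau)"
    by (simp add: bij_betw_def dic_aut_inj carrier_Gtau)
qed

lemma group_dicyclic: "group (dicyclic_group m)"
proof (rule group_by_bij_hom[OF group_Gtau dic_aut_inj carrier_Gtau[symmetric]])
  show "x \<otimes>\<^bsub>dicyclic_group m\<^esub> y \<in> carrier (dicyclic_group m)" for x y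
    using dicyclic_mult_closed by (simp add: dicyclic_group_def)
  show "dic_aut (x \<otimes>\<^bsub>dicyclic_group m\<^esub> y) = dic_aut x \<otimes>\<^bsub>Gtau\<^esub> dic_aut y" for x y
    by (simp add: dicyclic_group_def mult_Gtau dic_aut_mult)
  show "\<one>\<^bsub>dicyclic_group m\<^esub> \<in> carrier (dicyclic_group m)"
    using m_pos by (simp add: dicyclic_group_def)
  show "dic_aut \<one>\<^bsub>dicyclic_group m\<^esub> = \<one>\<^bsub>Gtau\<^esub>"
    by (simp add: dicyclic_group_def one_Gtau)
qed

theorem Gtau_iso_dicyclic: "Gtau \<cong> dicyclic_group m"
  using group.iso_sym[OF group_dicyclic] dic_aut_iso by (auto simp: is_iso_def)

end

section \<open>The invariant ring\<close>

definition power_sum :: "nat \<Rightarrow> skpoly" where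
  "power_sum N = sk_add (sk_mon (N, 0)) (sk_mon (0, N))"

definition sk_symm :: "nat \<times> nat \<Rightarrow> skpoly" where
  "sk_symm t = (\<lambda>e. if e = t \<or> e = prod.swap t then 1 else 0)"

lemma sk_symm_swap: "sk_symm (q, p) = sk_symm (p, q)"
  by (auto simp: sk_symm_def fun_eq_iff)

lemma sk_symm_diag: "sk_symm (p, p) = sk_mon (p, p)"
  by (auto simp: sk_symm_def sk_mon_def fun_eq_iff)

lemma sk_mult_x1_x2: "sk_mult sk_x1 sk_x2 = sk_mon (1, 1)"
  by (simp add: sk_x1_mon sk_x2_mon sk_mult_mon_mon)

lemma sk_mult_add_right: "sk_mult f (sk_add g h) = sk_add (sk_mult f g) (sk_mult f h)"
  by (auto simp: fun_eq_iff sk_mult_def sk_add_def algebra_simps sum.distrib)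

text \<open>Newton-type recursion for power sums of even step M (the signs from x2 x1 = -x1 x2 cancel).\<close>
lemma power_sum_rec:
  assumes "even M"
  shows "power_sum (N + 2 * M) = sk_add (sk_mult (power_sum M) (power_sum (N + M)))
           (sk_smult (-1) (sk_mult (sk_mon (M, M)) (power_sum N)))"
proof -
  have sign: "(-1::complex) ^ (M * k) = 1" for k using assms by (simp add: minus_one_power_iff)
  have prod: "sk_mult (power_sum M) (power_sum (N + M)) =
      sk_add (sk_add (sk_mon (N + 2 * M, 0)) (sk_mon (N + M, M)))
             (sk_add (sk_mon (M, N + M)) (sk_mon (0, N + 2 * M)))"
    by (simp add: power_sum_def sk_mult_add_left sk_mult_add_right sk_mult_mon_mon sign add_ac mult_2)
  have shift: "sk_mult (sk_mon (M, M)) (power_sum N) = sk_add (sk_mon (N + M, M)) (sk_mon (M, N + M))"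
    by (simp add: power_sum_def sk_mult_add_right sk_mult_mon_mon sign add_ac)
  show ?thesis unfolding prod shift
    by (simp add: power_sum_def fun_eq_iff sk_add_def sk_smult_def)
qed

lemma sk_symm_shift:
  assumes "0 < d" "even d"
  shows "sk_symm (k, k + d) = sk_mult (sk_mon (k, k)) (power_sum d)"
proof -
  have "(-1::complex) ^ (k * d) = 1" using assms by (simp add: minus_one_power_iff)
  hence "sk_mult (sk_mon (k, k)) (power_sum d) = sk_add (sk_mon (k + d, k)) (sk_mon (k, k + d))"
    by (simp add: power_sum_def sk_mult_add_right sk_mult_mon_mon)
  thus ?thesis using assms(1) by (auto simp: fun_eq_iff sk_symm_def sk_add_def sk_mon_def)
qed

lemma sk_alg_gen_smult: "f \<in> sk_alg_gen S \<Longrightarrow> sk_smult c f \<in> sk_alg_gen S"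
  using sk_alg_gen.mult[OF sk_alg_gen.scalar] by (simp add: sk_mult_scalar)

lemma sk_alg_gen_zero: "(\<lambda>e. 0) \<in> sk_alg_gen S"
  using sk_alg_gen.scalar[of 0] by (simp add: sk_zero_eq)

text \<open>Powers of x1 x2 are, up to sign, the diagonal monomials.\<close>
lemma sk_mon_diag_in_alg_gen:
  assumes "sk_mult sk_x1 sk_x2 \<in> S"
  shows "sk_mon (k, k) \<in> sk_alg_gen S"
proof (induction k)
  case 0
  show ?case using sk_alg_gen.scalar[of 1] by (simp add: sk_one_mon)
next
  case (Suc k)
  have "sk_smult ((-1) ^ k) (sk_mult (sk_mon (k, k)) (sk_mult sk_x1 sk_x2)) \<in> sk_alg_gen S"
    by (intro sk_alg_gen_smult sk_alg_gen.mult Suc sk_alg_gen.gen assms)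
  moreover have "(-1::complex) ^ k * (-1) ^ k = 1" by (simp add: power_add[symmetric])
  ultimately show ?case
    by (simp add: sk_mult_x1_x2 sk_mult_mon_mon sk_smult_def fun_eq_iff mult.assoc)
qed

context dicyclic_setting
begin

abbreviation u_gen :: skpoly where
  "u_gen \<equiv> sk_mult sk_x1 sk_x2"

abbreviation v_gen :: skpoly where
  "v_gen \<equiv> sk_add (sk_pow sk_x1 (2 * m)) (sk_pow sk_x2 (2 * m))"

abbreviation Cuv :: "skpoly set" where
  "Cuv \<equiv> sk_alg_gen {u_gen, v_gen}"

lemma v_gen_eq: "v_gen = power_sum (2 * m)"
  by (simp add: power_sum_def sk_pow_x1 sk_pow_x2)

lemma gens_in_skA: "{u_gen, v_gen} \<subseteq> skA"
  by (simp add: v_gen_eq power_sum_def sk_mult_x1_x2)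

lemma dic_aut_fixes_gens: "dic_aut x u_gen = u_gen" "dic_aut x v_gen = v_gen"
proof -
  obtain i s where x: "x = (i, s)" by (cases x)
  have inv: "w i * inverse (w i) = 1" using w_nonzero by simp
  have pow: "w i ^ (2 * m) = 1" "(- w i) ^ (2 * m) = 1" for i
  proof -
    show "w i ^ (2 * m) = 1" using w_period[of i] by (simp add: w_pow)
    thus "(- w i) ^ (2 * m) = 1" by (simp add: power_mult)
  qed
  show "dic_aut x u_gen = u_gen"
    unfolding x sk_mult_x1_x2 using inv
    by (cases s) (simp_all add: dic_aut_def mono_aut_mon w_neg mult.commute)
  show "dic_aut x v_gen = v_gen"
    unfolding x v_gen_eq power_sum_def
    using sk_alg_homD(1)[OF mono_aut_alg_hom] pow
    by (cases s) (simp_all add: dic_aut_def mono_aut_mon w_neg power_inverse sk_add_commute)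
qed

lemma Cuv_sub_invariants: "Cuv \<subseteq> sk_invariants Gtau"
proof
  fix f assume f: "f \<in> Cuv"
  have "g f = f" if "g \<in> carrier Gtau" for g
  proof -
    have "g \<in> dic_aut ` carrier (dicyclic_group m)" using that carrier_Gtau by simp
    then obtain x where g: "g = dic_aut x" by blast
    show ?thesis unfolding g
      by (rule sk_alg_hom_fixes_alg_gen[OF _ gens_in_skA _ f])
        (use dic_aut_aut[of x] dic_aut_fixes_gens[of x] in \<open>simp_all add: sk_aut_set_iff\<close>)
  qed
  thus "f \<in> sk_invariants Gtau"
    using sk_alg_gen_in_skA[OF f gens_in_skA] by (simp add: sk_invariants_def)
qed

text \<open>The power sums p_{2mr} lie in C[u,v], by the recursion p_{N+4m} = p_{2m} p_{N+2m} - u^{2m} p_N.\<close>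
lemma power_sum_in_Cuv: "power_sum (2 * m * r) \<in> Cuv"
proof -
  have "power_sum (2 * m * r) \<in> Cuv \<and> power_sum (2 * m * (r + 1)) \<in> Cuv"
  proof (induction r)
    case 0
    have "sk_smult 2 sk_one = power_sum 0"
      by (auto simp: fun_eq_iff power_sum_def sk_add_def sk_smult_def sk_one_def sk_mon_def)
    thus ?case using sk_alg_gen.scalar[of 2] sk_alg_gen.gen[of v_gen] by (simp add: v_gen_eq)
  next
    case (Suc r)
    have p2m: "power_sum (2 * m) \<in> Cuv"
      unfolding v_gen_eq[symmetric] by (rule sk_alg_gen.gen) simp
    have ih1: "power_sum (2 * m * r) \<in> Cuv" and ih2: "power_sum (2 * m * r + 2 * m) \<in> Cuv"
      using Suc.IH mult_Suc_right[of "2 * m" r] by (simp_all only: Suc_eq_plus1 add.commute)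
    have rec: "power_sum (2 * m * r + 2 * (2 * m)) =
        sk_add (sk_mult (power_sum (2 * m)) (power_sum (2 * m * r + 2 * m)))
          (sk_smult (-1) (sk_mult (sk_mon (2 * m, 2 * m)) (power_sum (2 * m * r))))"
      by (rule power_sum_rec) simp
    have "power_sum (2 * m * r + 2 * (2 * m)) \<in> Cuv"
      unfolding rec
      by (intro sk_alg_gen.add sk_alg_gen.mult sk_alg_gen_smult sk_mon_diag_in_alg_gen ih1 ih2 p2m) simp
    moreover have "2 * m * Suc r = 2 * m * r + 2 * m" "2 * m * (Suc r + 1) = 2 * m * r + 2 * (2 * m)"
      by (simp_all add: algebra_simps)
    ultimately show ?case using ih2 by (simp only:)
  qed
  thus ?thesis by blast
qed

lemma sk_symm_in_Cuv:
  assumes "(2 * int m) dvd (int q - int p)"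
  shows "sk_symm (p, q) \<in> Cuv"
proof -
  have *: "sk_symm (p, q) \<in> Cuv" if pq: "p \<le> q" and dv: "(2 * int m) dvd (int q - int p)" for p q
  proof (cases "p = q")
    case True thus ?thesis by (simp add: sk_symm_diag sk_mon_diag_in_alg_gen)
  next
    case False
    obtain r where r: "int q - int p = 2 * int m * r" using dv by (auto elim: dvdE)
    hence "0 < 2 * int m * r" using pq False by linarith
    hence "r > 0" using m_pos by (simp add: zero_less_mult_iff)
    then obtain r' where r': "r = int r'" "0 < r'" using zero_less_imp_eq_int by auto
    hence "int q = int (p + 2 * m * r')" using r by simp
    hence q: "q = p + 2 * m * r'" by (simp only: of_nat_eq_iff)
    show ?thesis unfolding q using r'(2) m_pos
      by (subst sk_symm_shift) (auto intro: sk_alg_gen.mult sk_mon_diag_in_alg_gen power_sum_in_Cuv)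
  qed
  show ?thesis
  proof (cases "p \<le> q")
    case True thus ?thesis using * assms by blast
  next
    case False
    have "(2 * int m) dvd (int p - int q)" using assms by (metis dvd_minus_iff minus_diff_eq)
    thus ?thesis using *[of q p] False sk_symm_swap by simp
  qed
qed

text \<open>The coefficient conditions characterising G-invariance: only exponents (p,q) with
  2m | q - p occur (invariance under a), and the coefficients are symmetric (under b).\<close>
definition balanced :: "skpoly \<Rightarrow> bool" where
  "balanced f \<longleftrightarrow> (\<forall>p q. f (p, q) \<noteq> 0 \<longrightarrow> (2 * int m) dvd (int q - int p))
                 \<and> (\<forall>p q. f (q, p) = f (p, q))"

lemma invariant_balanced:
  assumes f: "f \<in> sk_invariants Gtau"
  shows "balanced f"
proof -
  have fA: "f \<in> skA" and fix_f: "\<And>g. g \<in> carrier Gtau \<Longrightarrow> g f = f"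
    using f by (auto simp: sk_invariants_def)
  have "(1, False) \<in> carrier (dicyclic_group m)" "(0, True) \<in> carrier (dicyclic_group m)"
    using m_pos by (simp_all add: carrier_dicyclic)
  hence "dic_aut (1, False) f = f" "dic_aut (0, True) f = f"
    using fix_f image_sub_Gtau by blast+
  hence a: "mono_aut lam (inverse lam) False f = f" and b: "mono_aut (-1) 1 True f = f"
    by (simp_all add: dic_aut_def w_neg)
  have gap: "(2 * int m) dvd (int q - int p)" if nz: "f (p, q) \<noteq> 0" for p q
  proof -
    have "lam ^ p * inverse lam ^ q = 1"
      using a mono_aut_app[OF fA, of lam "inverse lam" False p q] nz by simp
    hence "w (int p - int q) = 1" by (simp add: w_diff w_nat power_inverse)
    hence "(2 * int m) dvd (int p - int q)" by (simp add: w_eq_1_iff)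
    thus ?thesis by (metis dvd_minus_iff minus_diff_eq)
  qed
  have symm: "f (q, p) = f (p, q)" if nz: "f (p, q) \<noteq> 0" for p q
  proof -
    have "even (int q - int p)" using gap[OF nz] by (metis dvd_mult_left dvd_trans even_numeral mult_2)
    hence "even (p * q + q)" by auto
    hence "(-1::complex) ^ (p * q) * (-1) ^ q = 1" by (simp add: power_add[symmetric])
    thus ?thesis using b mono_aut_app[OF fA, of "-1" 1 True p q] by simp
  qed
  have "f (q, p) = f (p, q)" for p q using symm[of p q] symm[of q p] by fastforce
  thus ?thesis using gap by (simp add: balanced_def)
qed

text \<open>A balanced element is a finite combination of the symmetrised monomials sk_symm (p,q)
  with 2m | q - p, each of which lies in C[u,v].\<close>
lemma balanced_in_Cuv:
  assumes "f \<in> skA" "balanced f"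
  shows "f \<in> Cuv"
  using assms
proof (induction "card (supp f)" arbitrary: f rule: less_induct)
  case less
  show ?case
  proof (cases "supp f = {}")
    case True
    hence "f = (\<lambda>e. 0)" by (auto simp: supp_def)
    thus ?thesis using sk_alg_gen_zero by simp
  next
    case False
    then obtain p q where pq: "f (p, q) \<noteq> 0" by (auto simp: supp_def)
    define f' where "f' = (\<lambda>e. if e = (p, q) \<or> e = (q, p) then 0 else f e)"
    have sub: "supp f' \<subset> supp f" using pq by (auto simp: supp_def f'_def)
    have fin: "finite (supp f)" using less.prems(1) by (simp add: skA_iff)
    have "f' \<in> skA" using finite_subset[OF psubset_imp_subset[OF sub] fin] by (simp add: skA_iff)
    moreover have "balanced f'" using less.prems(2) by (auto simp: balanced_def f'_def)
    ultimately have "f' \<in> Cuv" using less.hyps sub fin psubset_card_mono by blast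
    moreover have "sk_symm (p, q) \<in> Cuv"
      using less.prems(2) pq by (intro sk_symm_in_Cuv) (simp add: balanced_def)
    ultimately have "sk_add f' (sk_smult (f (p, q)) (sk_symm (p, q))) \<in> Cuv"
      by (intro sk_alg_gen.add sk_alg_gen_smult)
    moreover have "sk_add f' (sk_smult (f (p, q)) (sk_symm (p, q))) = f"
      using less.prems(2) by (auto simp: fun_eq_iff sk_add_def sk_smult_def sk_symm_def f'_def balanced_def)
    ultimately show ?thesis by simp
  qed
qed

theorem invariants_Gtau: "sk_invariants Gtau = Cuv"
proof
  show "sk_invariants Gtau \<subseteq> Cuv"
    using balanced_in_Cuv invariant_balanced by (auto simp: sk_invariants_def)
  show "Cuv \<subseteq> sk_invariants Gtau" by (rule Cuv_sub_invariants)
qed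

end

section \<open>Isomorphism invariants\<close>

definition involutions :: "('a, 'b) monoid_scheme \<Rightarrow> 'a set" where
  "involutions G = {x \<in> carrier G. x \<noteq> \<one>\<^bsub>G\<^esub> \<and> x \<otimes>\<^bsub>G\<^esub> x = \<one>\<^bsub>G\<^esub>}"

text \<open>Isomorphisms are only required to be multiplicative, so the target is merely assumed
  to have a right unit; this is all we know a priori about the matrix groups G(m',p,n').\<close>
lemma iso_preserves_one:
  assumes G: "group G" and h: "h \<in> iso G H"
    and one_H: "\<one>\<^bsub>H\<^esub> \<in> carrier H" and r_one_H: "\<And>z. z \<in> carrier H \<Longrightarrow> z \<otimes>\<^bsub>H\<^esub> \<one>\<^bsub>H\<^esub> = z"
  shows "h \<one>\<^bsub>G\<^esub> = \<one>\<^bsub>H\<^esub>"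
proof -
  interpret G: group G by (rule G)
  have hom: "h \<in> hom G H" and onto: "h ` carrier G = carrier H" using h by (auto simp: iso_iff)
  obtain u where u: "u \<in> carrier G" "h u = \<one>\<^bsub>H\<^esub>" using one_H onto by (metis imageE)
  have "\<one>\<^bsub>H\<^esub> = h (\<one>\<^bsub>G\<^esub> \<otimes>\<^bsub>G\<^esub> u)" using u by simp
  also have "\<dots> = h \<one>\<^bsub>G\<^esub> \<otimes>\<^bsub>H\<^esub> \<one>\<^bsub>H\<^esub>"
    by (simp only: hom_mult[OF hom G.one_closed u(1)] u(2))
  also have "\<dots> = h \<one>\<^bsub>G\<^esub>" using hom by (simp add: r_one_H hom_in_carrier)
  finally show ?thesis by simp
qed

lemma iso_image_involutions:
  assumes G: "group G" and h: "h \<in> iso G H"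
    and one_H: "\<one>\<^bsub>H\<^esub> \<in> carrier H" and r_one_H: "\<And>z. z \<in> carrier H \<Longrightarrow> z \<otimes>\<^bsub>H\<^esub> \<one>\<^bsub>H\<^esub> = z"
  shows "h ` involutions G = involutions H"
proof -
  interpret G: group G by (rule G)
  have hom: "h \<in> hom G H" and onto: "h ` carrier G = carrier H" and inj: "inj_on h (carrier G)"
    using h by (auto simp: iso_iff)
  have h1: "h \<one>\<^bsub>G\<^esub> = \<one>\<^bsub>H\<^esub>" by (rule iso_preserves_one[OF G h one_H r_one_H])
  have sq: "h (x \<otimes>\<^bsub>G\<^esub> x) = h x \<otimes>\<^bsub>H\<^esub> h x" if "x \<in> carrier G" for x
    using hom that by (simp add: hom_mult)
  have eq_one: "x = \<one>\<^bsub>G\<^esub> \<longleftrightarrow> h x = \<one>\<^bsub>H\<^esub>" if "x \<in> carrier G" for x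
    using inj that h1 by (metis G.one_closed inj_onD)
  show ?thesis
  proof
    show "h ` involutions G \<subseteq> involutions H"
      using onto by (auto simp: involutions_def eq_one simp flip: sq)
    show "involutions H \<subseteq> h ` involutions G"
    proof
      fix c assume c: "c \<in> involutions H"
      hence "c \<in> h ` carrier G" using onto by (simp add: involutions_def)
      then obtain x where x: "x \<in> carrier G" "h x = c" by blast
      hence "x \<otimes>\<^bsub>G\<^esub> x = \<one>\<^bsub>G\<^esub>" using c sq eq_one by (simp add: involutions_def)
      thus "c \<in> h ` involutions G" using x c eq_one by (auto simp: involutions_def)
    qed
  qed
qed

lemma not_iso_by_involutions:
  assumes G: "group G" and inv_G: "involutions G = {x}"
    and one_H: "\<one>\<^bsub>H\<^esub> \<in> carrier H" and r_one_H: "\<And>z. z \<in> carrier H \<Longrightarrow> z \<otimes>\<^bsub>H\<^esub> \<one>\<^bsub>H\<^esub> = z"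
    and ab: "a \<in> involutions H" "b \<in> involutions H" "a \<noteq> b"
  shows "\<not> G \<cong> H"
proof
  assume "G \<cong> H"
  then obtain h where "h \<in> iso G H" by (auto simp: is_iso_def)
  hence "involutions H = {h x}" using iso_image_involutions[OF G _ one_H r_one_H] inv_G by simp
  thus False using ab by simp
qed

lemma iso_reflects_commute:
  assumes G: "monoid G" and h: "h \<in> iso G H"
    and comm: "\<And>a b. a \<in> carrier H \<Longrightarrow> b \<in> carrier H \<Longrightarrow> a \<otimes>\<^bsub>H\<^esub> b = b \<otimes>\<^bsub>H\<^esub> a"
    and x: "x \<in> carrier G" and y: "y \<in> carrier G"
  shows "x \<otimes>\<^bsub>G\<^esub> y = y \<otimes>\<^bsub>G\<^esub> x"
proof -
  have hom: "h \<in> hom G H" and inj: "inj_on h (carrier G)" using h by (auto simp: iso_iff)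
  have "h (x \<otimes>\<^bsub>G\<^esub> y) = h (y \<otimes>\<^bsub>G\<^esub> x)"
    using hom x y comm by (simp add: hom_mult hom_in_carrier)
  thus ?thesis using inj x y monoid.m_closed[OF G] by (meson inj_onD)
qed

context dicyclic_setting
begin

lemma dic_aut_in_Gtau: "dic_aut (i, s) \<in> carrier Gtau"
proof -
  have "dic_aut (i, s) = dic_aut (i mod (2 * int m), s)" by (simp add: dic_aut_mod)
  also have "\<dots> \<in> carrier Gtau" using image_sub_Gtau m_pos by (auto simp: carrier_dicyclic)
  finally show ?thesis .
qed

lemma card_Gtau: "card (carrier Gtau) = 4 * m"
  using card_image[OF dic_aut_inj] by (simp add: carrier_Gtau carrier_dicyclic card_cartesian_product)

text \<open>For m >= 2 the relation b a b^-1 = a^-1 makes G nonabelian.\<close>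
lemma Gtau_noncommutative:
  assumes "m \<ge> 2"
  shows "dic_aut (1, False) \<otimes>\<^bsub>Gtau\<^esub> dic_aut (0, True) \<noteq> dic_aut (0, True) \<otimes>\<^bsub>Gtau\<^esub> dic_aut (1, False)"
proof -
  have "\<not> (2 * int m) dvd 2"
    using assms by (auto dest: zdvd_imp_le)
  thus ?thesis by (simp add: mult_Gtau dic_aut_compose dic_aut_eq_iff)
qed

lemma involutions_Gtau: "involutions Gtau = {dic_aut (int m, False)}"
proof -
  have square: "z \<otimes>\<^bsub>Gtau\<^esub> z = \<one>\<^bsub>Gtau\<^esub> \<and> z \<noteq> \<one>\<^bsub>Gtau\<^esub> \<longleftrightarrow> z = dic_aut (int m, False)"
    if "z \<in> carrier Gtau" for z
  proof -
    obtain i s where z: "z = dic_aut (i, s)" and i: "0 \<le> i" "i < 2 * int m"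
      using \<open>z \<in> carrier Gtau\<close> by (auto simp: carrier_Gtau carrier_dicyclic)
    have "(2 * int m) dvd (i + i) \<and> \<not> (2 * int m) dvd i \<longleftrightarrow> i = int m"
    proof
      assume "(2 * int m) dvd (i + i) \<and> \<not> (2 * int m) dvd i"
      then obtain k where k: "i + i = 2 * int m * k" and nd: "\<not> (2 * int m) dvd i" by (auto elim: dvdE)
      hence ik: "i = int m * k" by simp
      have "k \<noteq> 0" using nd ik by auto
      moreover have "0 \<le> k" using i(1) ik m_pos by (simp add: zero_le_mult_iff)
      moreover have "k < 2" using i ik m_pos by (auto simp: mult_less_cancel_left)
      ultimately show "i = int m" using ik by simp
    qed (use m_pos in auto)
    moreover have "\<not> (2 * int m) dvd int m" using m_pos by (auto dest: zdvd_imp_le)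
    moreover have "(2 * int m) dvd (i - int m) \<longleftrightarrow> i = int m"
      using i m_pos by (auto intro: dvd_diff_residues_eq)
    ultimately show ?thesis
      unfolding z by (cases s) (auto simp: mult_Gtau one_Gtau dic_aut_compose dic_aut_eq_iff)
  qed
  show ?thesis using square dic_aut_in_Gtau by (auto simp: involutions_def)
qed

lemma not_iso_commutative:
  assumes "m \<ge> 2" and h: "h \<in> iso Gtau H"
    and comm: "\<And>a b. a \<in> carrier H \<Longrightarrow> b \<in> carrier H \<Longrightarrow> a \<otimes>\<^bsub>H\<^esub> b = b \<otimes>\<^bsub>H\<^esub> a"
  shows False
  using iso_reflects_commute[OF group.is_monoid[OF group_Gtau] h comm dic_aut_in_Gtau dic_aut_in_Gtau]
    Gtau_noncommutative[OF assms(1)] by blast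

theorem Gtau_not_iso_cyclic:
  assumes "m \<ge> 2" and H: "group H" "cyclic_group H"
  shows "\<not> Gtau \<cong> H"
proof
  assume "Gtau \<cong> H"
  then obtain h where h: "h \<in> iso Gtau H" by (auto simp: is_iso_def)
  have "comm_group H" using H by (simp add: group.cyclic_imp_abelian_group)
  thus False using not_iso_commutative[OF assms(1) h] by (metis comm_group_def comm_monoid.m_comm)
qed

text \<open>For n >= 3 the symmetric group contains two distinct transpositions, while for n <= 2
  it has at most 6 < 4m elements.\<close>
theorem Gtau_not_iso_sym:
  assumes m2: "m \<ge> 2"
  shows "\<not> Gtau \<cong> sym_group n"
proof (cases "n \<ge> 3")
  case True
  let ?a = "transpose (1::nat) 2" and ?b = "transpose (1::nat) 3"
  have "?a \<noteq> id" "?b \<noteq> id" "?a \<noteq> ?b"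
    by (auto simp: fun_eq_iff intro!: exI[of _ "1::nat"])
  hence "?a \<in> involutions (sym_group n)" "?b \<in> involutions (sym_group n)" "?a \<noteq> ?b"
    using True by (auto simp: involutions_def sym_group_def permutes_swap_id)
  thus ?thesis
    using group.is_monoid[OF sym_group_is_group]
    by (intro not_iso_by_involutions[OF group_Gtau involutions_Gtau]) (auto simp: monoid.r_one)
next
  case False
  hence "fact n \<le> (fact 3 :: nat)" by (intro fact_mono_nat) simp
  hence "card (carrier (sym_group n)) \<noteq> card (carrier Gtau)"
    using m2 by (simp add: sym_group_def card_permutations card_Gtau fact_numeral)
  thus ?thesis by (auto dest: iso_same_card)
qed

end

section \<open>The groups G(m',p,n')\<close>

lemma diag_carrier [simp]: "diag_matrix n \<omega> \<in> carrier_mat n n"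
  by (simp add: diag_matrix_def)

lemma perm_carrier [simp]: "perm_matrix n \<sigma> \<in> carrier_mat n n"
  by (simp add: perm_matrix_def)

lemma mat_mult_entry:
  assumes "i < n" "j < n"
  shows "(mat n n f * mat n n g) $$ (i, j) = (\<Sum>k\<in>{0..<n}. f (i, k) * g (k, j))"
  using assms by (simp add: scalar_prod_def)

lemma diag_perm_eq:
  "diag_matrix n \<omega> * perm_matrix n \<sigma> = mat n n (\<lambda>(i, j). if i = \<sigma> j then \<omega> i else 0)"
proof (rule eq_matI)
  fix i j assume "i < dim_row (mat n n (\<lambda>(i, j). if i = \<sigma> j then \<omega> i else 0))"
    "j < dim_col (mat n n (\<lambda>(i, j). if i = \<sigma> j then \<omega> i else 0))"
  hence ij: "i < n" "j < n" by simp_all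
  have "(diag_matrix n \<omega> * perm_matrix n \<sigma>) $$ (i, j) =
      (\<Sum>k\<in>{0..<n}. (if i = k then \<omega> i else 0) * (if k = \<sigma> j then 1 else 0))"
    unfolding diag_matrix_def perm_matrix_def by (subst mat_mult_entry[OF ij]) simp
  also have "\<dots> = (\<Sum>k\<in>{0..<n}. if k = i then (if i = \<sigma> j then \<omega> i else 0) else 0)"
    by (intro sum.cong) auto
  finally show "(diag_matrix n \<omega> * perm_matrix n \<sigma>) $$ (i, j) =
      mat n n (\<lambda>(i, j). if i = \<sigma> j then \<omega> i else 0) $$ (i, j)"
    using ij by simp
qed (simp_all add: diag_matrix_def perm_matrix_def)

lemma perm_mult:
  assumes "\<tau> permutes {..<n}"
  shows "perm_matrix n \<sigma> * perm_matrix n \<tau> = perm_matrix n (\<sigma> \<circ> \<tau>)"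
proof (rule eq_matI)
  fix i j assume "i < dim_row (perm_matrix n (\<sigma> \<circ> \<tau>))" "j < dim_col (perm_matrix n (\<sigma> \<circ> \<tau>))"
  hence ij: "i < n" "j < n" by (simp_all add: perm_matrix_def)
  have tj: "\<tau> j < n" using permutes_in_image[OF assms] ij by simp
  have "(perm_matrix n \<sigma> * perm_matrix n \<tau>) $$ (i, j) =
      (\<Sum>k\<in>{0..<n}. (if i = \<sigma> k then 1 else 0) * (if k = \<tau> j then 1 else 0))"
    unfolding perm_matrix_def by (subst mat_mult_entry[OF ij]) simp
  also have "\<dots> = (\<Sum>k\<in>{0..<n}. if k = \<tau> j then (if i = \<sigma> (\<tau> j) then 1 else 0) else 0)"
    by (intro sum.cong) auto
  finally show "(perm_matrix n \<sigma> * perm_matrix n \<tau>) $$ (i, j) = perm_matrix n (\<sigma> \<circ> \<tau>) $$ (i, j)"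
    using ij tj by (simp add: perm_matrix_def)
qed (simp_all add: perm_matrix_def)

lemma perm_id: "perm_matrix n id = 1\<^sub>m n"
  by (rule eq_matI) (auto simp: perm_matrix_def)

lemma diag_one: "diag_matrix n (\<lambda>_. 1) = 1\<^sub>m n"
  by (rule eq_matI) (auto simp: diag_matrix_def)

lemma perm_transpose_square:
  assumes "a < n" "b < n"
  shows "perm_matrix n (transpose a b) * perm_matrix n (transpose a b) = 1\<^sub>m n"
  using assms by (simp add: perm_mult permutes_swap_id perm_id)

lemma Gmpn_one: "\<one>\<^bsub>Gmpn m' p n'\<^esub> = 1\<^sub>m n'"
  by (simp add: Gmpn_def)

lemma Gmpn_mult: "x \<otimes>\<^bsub>Gmpn m' p n'\<^esub> y = x * y"
  by (simp add: Gmpn_def)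

lemma Gmpn_carrier_mat: "x \<in> carrier (Gmpn m' p n') \<Longrightarrow> x \<in> carrier_mat n' n'"
  by (auto simp: Gmpn_def intro!: mult_carrier_mat[OF diag_carrier perm_carrier])

lemma Gmpn_memI:
  assumes "\<sigma> permutes {..<n'}" "\<forall>i<n'. \<omega> i ^ m' = 1" "(\<Prod>i<n'. \<omega> i) ^ (m' div p) = 1"
  shows "diag_matrix n' \<omega> * perm_matrix n' \<sigma> \<in> carrier (Gmpn m' p n')"
  using assms unfolding Gmpn_def by auto

lemma Gmpn_perm_in: "\<sigma> permutes {..<n'} \<Longrightarrow> perm_matrix n' \<sigma> \<in> carrier (Gmpn m' p n')"
  using Gmpn_memI[of \<sigma> n' "\<lambda>_. 1" m' p] by (simp add: diag_one left_mult_one_mat[OF perm_carrier])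

lemma Gmpn_one_in: "\<one>\<^bsub>Gmpn m' p n'\<^esub> \<in> carrier (Gmpn m' p n')"
  using Gmpn_perm_in[OF permutes_id] by (simp add: perm_id Gmpn_one)

lemma Gmpn_r_one: "z \<in> carrier (Gmpn m' p n') \<Longrightarrow> z \<otimes>\<^bsub>Gmpn m' p n'\<^esub> \<one>\<^bsub>Gmpn m' p n'\<^esub> = z"
  unfolding Gmpn_one Gmpn_mult by (rule right_mult_one_mat[OF Gmpn_carrier_mat])

text \<open>For n' = 1 the group G(m',p,1) consists of 1x1 matrices, hence is commutative.\<close>
lemma Gmpn_1_commute:
  assumes "A \<in> carrier (Gmpn m' p 1)" "B \<in> carrier (Gmpn m' p 1)"
  shows "A \<otimes>\<^bsub>Gmpn m' p 1\<^esub> B = B \<otimes>\<^bsub>Gmpn m' p 1\<^esub> A"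
proof -
  have "A \<in> carrier_mat 1 1" "B \<in> carrier_mat 1 1" using assms by (simp_all add: Gmpn_carrier_mat)
  thus ?thesis by (intro eq_matI) (auto simp: Gmpn_mult scalar_prod_def mult.commute)
qed

text \<open>For n' = 2 and m' = 1 only the two permutation matrices remain.\<close>
lemma card_Gmpn_1_2:
  shows "finite (carrier (Gmpn 1 p 2))" "card (carrier (Gmpn 1 p 2)) \<le> 2"
proof -
  have sub: "carrier (Gmpn 1 p 2) \<subseteq> perm_matrix 2 ` {\<sigma>. \<sigma> permutes {..<2}}"
  proof
    fix x assume "x \<in> carrier (Gmpn 1 p 2)"
    then obtain \<omega> \<sigma> where x: "x = diag_matrix 2 \<omega> * perm_matrix 2 \<sigma>" and s: "\<sigma> permutes {..<2}"
      and w: "\<forall>i<2. \<omega> i ^ 1 = 1" by (auto simp: Gmpn_def)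
    have "diag_matrix 2 \<omega> = diag_matrix 2 (\<lambda>_. 1)"
      using w by (intro eq_matI) (auto simp: diag_matrix_def)
    hence "x = perm_matrix 2 \<sigma>" using x by (simp add: diag_one left_mult_one_mat[OF perm_carrier])
    thus "x \<in> perm_matrix 2 ` {\<sigma>. \<sigma> permutes {..<2}}" using s by auto
  qed
  have fin: "finite {\<sigma>. \<sigma> permutes {..<(2::nat)}}" by (rule finite_permutations) simp
  have "card {\<sigma>. \<sigma> permutes {..<(2::nat)}} = 2"
    using card_permutations[of "{..<(2::nat)}" 2] by simp
  thus "card (carrier (Gmpn 1 p 2)) \<le> 2"
    using sub fin by (metis card_image_le card_mono finite_imageI le_trans)
  show "finite (carrier (Gmpn 1 p 2))" using sub fin by (meson finite_imageI finite_subset)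
qed

text \<open>For k >= 2 there is a k-th root of unity other than 1, namely cis (2 pi / k).\<close>
lemma root_of_unity_ne_1:
  assumes "(2::nat) \<le> k"
  shows "\<exists>\<zeta>::complex. \<zeta> ^ k = 1 \<and> \<zeta> \<noteq> 1"
proof -
  define x where "x = 2 * pi / real k"
  have k: "real k \<ge> 2" using assms by simp
  have "cis x ^ k = 1" using k by (simp add: x_def DeMoivre)
  moreover have "0 < x" "x \<le> pi" using k pi_gt_zero by (auto simp: x_def field_simps)
  moreover have "cis x \<noteq> 1"
  proof (cases "x = pi")
    case False
    hence "sin x > 0" using \<open>0 < x\<close> \<open>x \<le> pi\<close> by (intro sin_gt_zero) auto
    hence "Im (cis x) \<noteq> Im 1" by simp
    thus ?thesis by metis
  qed simp
  ultimately show ?thesis by blast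
qed

text \<open>Two distinct involutions in G(m',p,2) for m' >= 2: the swap matrix, and the swap
  matrix twisted by diag(zeta, zeta^-1) for an m'-th root of unity zeta <> 1.\<close>
lemma Gmpn_2_two_involutions:
  assumes "2 \<le> m'"
  shows "\<exists>a b. a \<in> involutions (Gmpn m' p 2) \<and> b \<in> involutions (Gmpn m' p 2) \<and> a \<noteq> b"
proof -
  obtain \<zeta> :: complex where z: "\<zeta> ^ m' = 1" "\<zeta> \<noteq> 1" using root_of_unity_ne_1[OF assms] by blast
  have z0: "\<zeta> \<noteq> 0" using z assms by (metis power_0_left not_numeral_le_zero le_zero_eq)
  define \<omega> where "\<omega> = (\<lambda>i::nat. if i = 0 then \<zeta> else inverse \<zeta>)"
  define t where "t = transpose (0::nat) 1"
  have t: "t permutes {..<2}" unfolding t_def by (intro permutes_swap_id) auto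
  let ?a = "perm_matrix 2 t" and ?b = "diag_matrix 2 \<omega> * perm_matrix 2 t"
  have a_ent: "?a $$ (0, 1) = 1" by (simp add: perm_matrix_def t_def)
  have b_ent: "?b $$ (0, 1) = \<zeta>" by (simp add: diag_perm_eq \<omega>_def t_def)
  have one_ent: "(1\<^sub>m 2 :: complex mat) $$ (0, 1) = 0" by simp
  have a_sq: "?a * ?a = 1\<^sub>m 2" unfolding t_def by (rule perm_transpose_square) auto
  have b_sq: "?b * ?b = 1\<^sub>m 2"
  proof (rule eq_matI)
    fix i j assume "i < dim_row (1\<^sub>m 2 :: complex mat)" "j < dim_col (1\<^sub>m 2 :: complex mat)"
    hence "i < 2" "j < 2" by simp_all
    thus "(?b * ?b) $$ (i, j) = 1\<^sub>m 2 $$ (i, j)"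
      unfolding diag_perm_eq using z0
      by (subst mat_mult_entry) (auto simp: \<omega>_def t_def numeral_2_eq_2 less_Suc_eq)
  qed (simp_all add: diag_perm_eq)
  have "?b \<in> carrier (Gmpn m' p 2)"
  proof (rule Gmpn_memI[OF t])
    show "\<forall>i<2. \<omega> i ^ m' = 1" using z by (simp add: \<omega>_def power_inverse)
    show "(\<Prod>i<2. \<omega> i) ^ (m' div p) = 1" using z0 by (simp add: \<omega>_def numeral_2_eq_2)
  qed
  moreover have "?a \<in> carrier (Gmpn m' p 2)" by (rule Gmpn_perm_in[OF t])
  moreover have "?a \<noteq> ?b" "?a \<noteq> 1\<^sub>m 2" "?b \<noteq> 1\<^sub>m 2"
    using a_ent b_ent one_ent z z0 by auto
  ultimately show ?thesis
    using a_sq b_sq by (intro exI[of _ ?a] exI[of _ ?b]) (simp add: involutions_def Gmpn_one Gmpn_mult)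
qed

lemma Gmpn_two_transpositions:
  assumes "3 \<le> n'"
  shows "\<exists>a b. a \<in> involutions (Gmpn m' p n') \<and> b \<in> involutions (Gmpn m' p n') \<and> a \<noteq> b"
proof -
  let ?a = "perm_matrix n' (transpose 0 1)" and ?b = "perm_matrix n' (transpose 1 2)"
  have "transpose 0 1 permutes {..<n'}" "transpose 1 2 permutes {..<n'}"
    using assms by (auto intro: permutes_swap_id)
  moreover have "?a $$ (0, 1) = 1" "?b $$ (0, 1) = 0" "?b $$ (1, 2) = 1"
    "(1\<^sub>m n' :: complex mat) $$ (0, 1) = 0" "(1\<^sub>m n' :: complex mat) $$ (1, 2) = 0"
    using assms by (simp_all add: perm_matrix_def)
  ultimately show ?thesis
    using assms
    by (intro exI[of _ ?a] exI[of _ ?b])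
      (auto simp: involutions_def Gmpn_one Gmpn_mult Gmpn_perm_in perm_transpose_square)
qed

context dicyclic_setting
begin

theorem Gtau_not_iso_Gmpn:
  assumes m2: "m \<ge> 2" and pos: "0 < m'" "0 < n'"
  shows "\<not> Gtau \<cong> Gmpn m' p n'"
proof
  assume iso: "Gtau \<cong> Gmpn m' p n'"
  have by_involutions: "\<not> Gtau \<cong> Gmpn m' p n'"
    if "a \<in> involutions (Gmpn m' p n')" "b \<in> involutions (Gmpn m' p n')" "a \<noteq> b" for a b
    using that Gmpn_one_in Gmpn_r_one by (intro not_iso_by_involutions[OF group_Gtau involutions_Gtau])
  consider "n' = 1" | "n' = 2" "m' = 1" | "n' = 2" "m' \<ge> 2" | "n' \<ge> 3"
    using pos by linarith
  thus False
  proof cases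
    case 1
    from iso obtain h where "h \<in> iso Gtau (Gmpn m' p n')" by (auto simp: is_iso_def)
    thus False using not_iso_commutative[OF m2] Gmpn_1_commute 1 by blast
  next
    case 2
    hence "card (carrier Gtau) = card (carrier (Gmpn 1 p 2))" using iso_same_card[OF iso] by simp
    thus False using card_Gmpn_1_2(2)[of p] card_Gtau m2 by linarith
  next
    case 3
    thus False using iso Gmpn_2_two_involutions by (metis by_involutions)
  next
    case 4
    thus False using iso Gmpn_two_transpositions by (metis by_involutions)
  qed
qed

end

theorem mainTheorem18:
  fixes m :: nat and lam :: complex
  assumes "m \<ge> 1"
    and "lam ^ (2 * m) = 1" and "\<forall>k. 0 < k \<and> k < 2 * m \<longrightarrow> lam ^ k \<noteq> 1"
  defines "G \<equiv> subgroup_generated sk_Aut {sk_tau 2 1 1, sk_tau 2 1 lam}"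
  shows "sk_invariants G =
           sk_alg_gen {sk_mult sk_x1 sk_x2, sk_add (sk_pow sk_x1 (2 * m)) (sk_pow sk_x2 (2 * m))}
         \<and> G \<cong> dicyclic_group m
         \<and> (m \<ge> 2 \<longrightarrow>
           (\<forall>H :: ('c, 'd) monoid_scheme. group H \<and> cyclic_group H \<longrightarrow> \<not> G \<cong> H)
         \<and> (\<forall>n. \<not> G \<cong> sym_group n)
         \<and> (\<forall>m' p n'. 0 < m' \<and> 0 < p \<and> 0 < n' \<and> p dvd m' \<longrightarrow> \<not> G \<cong> Gmpn m' p n'))"
proof -
  interpret dicyclic_setting m lam using assms(1-3) by unfold_locales
  have G: "G = Gtau" unfolding G_def Gtau_def ..
  show ?thesis
    unfolding G
    using invariants_Gtau Gtau_iso_dicyclic Gtau_not_iso_cyclic Gtau_not_iso_sym Gtau_not_iso_Gmpn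
    by blast
qed

end
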